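(* Suppose $L\ge 1$ and the eigenvalues $\lambda_1(\operatorname{cov}(\boldsymbol{f})),\dots,\lambda_L(\operatorname{cov}(\boldsymbol{f}))$ are distinct. Then the D-GCCA common-source vectors $\boldsymbol{c}_1,\dots,\boldsymbol{c}_K$ (defined in the context) do not depend on the (non-unique) choice of the orthonormal bases $\boldsymbol{f}_1,\dots,\boldsymbol{f}_K$ nor on the choice of the eigenvectors $\{\boldsymbol{\eta}^{(\ell)}\}_{1\le\ell\le L}$. (Note that the eigenvalues of $\operatorname{cov}(\boldsymbol f)$ themselves do not depend on the choice of the bases.)
   Context: $\mathcal{L}_0^2$ is the space of real-valued random variables with zero mean and finite variance with the covariance as inner product; $\perp$ means zero covariance, $\|x\|=\sqrt{\operatorname{var}(x)}$, $\theta(x,y)$ is the angle with $\cos\theta(x,y)=\operatorname{corr}(x,y)$, $\operatorname{corr}(x,0)=0$. $K\ge2$; $\boldsymbol{x}_k\in\mathbb{R}^{p_k}$ ($k\le K$) are random vectors with entries in $\mathcal{L}_0^2$, $r_k=\dim\operatorname{span}(\boldsymbol{x}_k^\top)\ge1$ (span of the entries), $r_f=\dim\sum_k\operatorname{span}(\boldsymbol{x}_k^\top)$. D-GCCA construction: choose $\boldsymbol{f}_k\in\mathbb{R}^{r_k}$ whose entries form an orthonormal basis of $\operatorname{span}(\boldsymbol{x}_k^\top)$, $\boldsymbol{f}=(\boldsymbol{f}_1^\top,\dots,\boldsymbol{f}_K^\top)^\top$, and orthonormal eigenvectors $\boldsymbol{\eta}^{(\ell)}=((\boldsymbol{\eta}^{(\ell)}_1)^\top,\dots,(\boldsymbol{\eta}^{(\ell)}_K)^\top)^\top$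 ($\boldsymbol\eta^{(\ell)}_k\in\mathbb{R}^{r_k}$) of $\operatorname{cov}(\boldsymbol{f})$ for its $\ell$th largest eigenvalue $\lambda_\ell(\operatorname{cov}(\boldsymbol f))$, $\ell\le r_f$. Set $w^{(\ell)}=\lambda_\ell(\operatorname{cov}(\boldsymbol f))^{-1/2}(\boldsymbol{\eta}^{(\ell)})^\top\boldsymbol{f}$, and $z_k^{(\ell)}=(\boldsymbol{\eta}_k^{(\ell)}/\|\boldsymbol{\eta}_k^{(\ell)}\|_F)^\top\boldsymbol{f}_k$ if $\boldsymbol\eta^{(\ell)}_k\ne\boldsymbol0$ and $z_k^{(\ell)}=0$ otherwise. $\alpha^{(\ell)}$ is the real number such that, with $c^{(\ell)}=\alpha^{(\ell)}w^{(\ell)}$ and $d_k^{(\ell)}=z_k^{(\ell)}-c^{(\ell)}$, $|\alpha^{(\ell)}|$ is the smallest value of $|\alpha|$ for which at least one pair $j\ne k$ has $d^{(\ell)}_j\perp d^{(\ell)}_k$, and $\alpha^{(\ell)}<0$ if there are two such values (such $\alpha^{(\ell)}$ always exists). Let $L=\max\{\ell\le r_f:\lambda_\ell(\operatorname{cov}(\boldsymbol f))>1\}$, $\mathcal{I}_0=\{\ell\le L:\alpha^{(\ell)}\neq 0\}$, $\boldsymbol{z}_k^{\mathcal{I}_0}=(z_k^{(\ell)})^\top_{\ell\in\mathcal{I}_0}$, $\boldsymbol{c}^{\mathcal{I}_0}=(c^{(\ell)})^\top_{\ell\in\mathcal{I}_0}$ (increasing order of $\ell$). The common-source vector is $\boldsymbol{c}_k=\operatorname{cov}(\boldsymbol{x}_k,\boldsymbol{z}_k^{\mathcal{I}_0})\{\operatorname{cov}(\boldsymbol{z}_k^{\mathcal{I}_0})\}^{\dagger}\boldsymbol{c}^{\mathcal{I}_0}$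 if $\mathcal{I}_0\ne\emptyset$ and $\boldsymbol{c}_k=\boldsymbol{0}$ otherwise, where $\dagger$ is the Moore–Penrose pseudoinverse and $\operatorname{cov}(\boldsymbol u,\boldsymbol v)$ is the matrix with $(i,j)$ entry $\operatorname{cov}(u_i,v_j)$. *)

theory Defs
  imports "HOL-Analysis.Inner_Product" "Jordan_Normal_Form.Char_Poly"
    "HOL-Library.Multiset"
begin

text \<open>The ambient space: the paper works in L_0^2 (zero-mean, finite-variance random
variables, identified up to a.s. equality) with covariance as inner product.
We work in an arbitrary real inner product space 'v (type class real_inner),
with inner product playing the role of covariance.  Orthogonality means zero
inner product, the norm is the standard deviation.

Random vectors: block k (k < K, 0-indexed) is x k with entries x k i, i < p k.
A candidate D-GCCA choice consists of
  fv :: nat => 'v  -- the concatenated vector f = (f_1,...,f_K), where block k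
                      occupies positions offs r k .. offs r k + r k - 1
  eta :: nat => real vec -- eta l is the eigenvector eta^(l), l = 1..r_f,
                      an element of R^n (n = sum of the r_k), indexed like f.\<close>

definition span_blk :: "(nat \<Rightarrow> nat \<Rightarrow> 'v::real_inner) \<Rightarrow> (nat \<Rightarrow> nat) \<Rightarrow> nat \<Rightarrow> 'v set" where
  "span_blk x p k = span (x k ` {..<p k})"

definition rk :: "(nat \<Rightarrow> nat \<Rightarrow> 'v::real_inner) \<Rightarrow> (nat \<Rightarrow> nat) \<Rightarrow> nat \<Rightarrow> nat" where
  "rk x p k = dim (span_blk x p k)"

definition rf :: "(nat \<Rightarrow> nat \<Rightarrow> 'v::real_inner) \<Rightarrow> (nat \<Rightarrow> nat) \<Rightarrow> nat \<Rightarrow> nat" where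
  "rf x p K = dim (span (\<Union>k<K. span_blk x p k))"

definition offs :: "(nat \<Rightarrow> nat) \<Rightarrow> nat \<Rightarrow> nat" where
  "offs r k = (\<Sum>i<k. r i)"

definition cov_mat :: "(nat \<Rightarrow> 'v::real_inner) \<Rightarrow> nat \<Rightarrow> real mat" where
  "cov_mat v n = mat n n (\<lambda>(i,j). inner (v i) (v j))"

text \<open>lambda_l(A): the l-th largest eigenvalue (l >= 1), counted with algebraic
multiplicity, i.e. the roots of the characteristic polynomial sorted decreasingly.\<close>
definition eigval :: "real mat \<Rightarrow> nat \<Rightarrow> real" where
  "eigval A l = rev (sorted_list_of_multiset (proots (char_poly A))) ! (l - 1)"

definition pinv :: "real mat \<Rightarrow> real mat" where
  "pinv A = (THE X. X \<in> carrier_mat (dim_col A) (dim_row A) \<and>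
      A * X * A = A \<and> X * A * X = X \<and>
      transpose_mat (A * X) = A * X \<and> transpose_mat (X * A) = X * A)"

definition dgcca_choice ::
  "(nat \<Rightarrow> nat \<Rightarrow> 'v::real_inner) \<Rightarrow> (nat \<Rightarrow> nat) \<Rightarrow> nat \<Rightarrow> (nat \<Rightarrow> 'v) \<Rightarrow> (nat \<Rightarrow> real vec) \<Rightarrow> bool" where
  "dgcca_choice x p K fv eta \<longleftrightarrow>
     (let r = rk x p; n = offs r K; C = cov_mat fv n in
      \<comment> \<open>entries of f_k form an orthonormal basis of span(x_k)\<close>
      (\<forall>k<K. (\<forall>i<r k. \<forall>j<r k. inner (fv (offs r k + i)) (fv (offs r k + j)) = (if i = j then 1 else 0))
             \<and> span ((\<lambda>j. fv (offs r k + j)) ` {..<r k}) = span_blk x p k)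
      \<comment> \<open>eta^(1..r_f) orthonormal eigenvectors of cov(f) for lambda_1..lambda_{r_f}\<close>
    \<and> (\<forall>l\<in>{1..rf x p K}. eta l \<in> carrier_vec n \<and> C *\<^sub>v eta l = eigval C l \<cdot>\<^sub>v eta l)
    \<and> (\<forall>l\<in>{1..rf x p K}. \<forall>l'\<in>{1..rf x p K}. eta l \<bullet> eta l' = (if l = l' then 1 else 0)))"

context
  fixes x :: "nat \<Rightarrow> nat \<Rightarrow> 'v::real_inner" and p :: "nat \<Rightarrow> nat" and K :: nat
    and fv :: "nat \<Rightarrow> 'v" and eta :: "nat \<Rightarrow> real vec"
begin

definition dg_n :: nat where "dg_n = offs (rk x p) K"

definition dg_lambda :: "nat \<Rightarrow> real" where
  "dg_lambda l = eigval (cov_mat fv dg_n) l"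

definition dg_w :: "nat \<Rightarrow> 'v" where
  "dg_w l = (1 / sqrt (dg_lambda l)) *\<^sub>R (\<Sum>i<dg_n. (eta l $ i) *\<^sub>R fv i)"

definition dg_blknorm :: "nat \<Rightarrow> nat \<Rightarrow> real" where
  "dg_blknorm k l = sqrt (\<Sum>j<rk x p k. (eta l $ (offs (rk x p) k + j))\<^sup>2)"

definition dg_z :: "nat \<Rightarrow> nat \<Rightarrow> 'v" where
  "dg_z k l = (if (\<forall>j<rk x p k. eta l $ (offs (rk x p) k + j) = 0) then 0
     else (1 / dg_blknorm k l) *\<^sub>R (\<Sum>j<rk x p k. (eta l $ (offs (rk x p) k + j)) *\<^sub>R fv (offs (rk x p) k + j)))"

definition dg_Aset :: "nat \<Rightarrow> real set" where
  "dg_Aset l = {a. \<exists>j<K. \<exists>k<K. j \<noteq> k \<and> inner (dg_z j l - a *\<^sub>R dg_w l) (dg_z k l - a *\<^sub>R dg_w l) = 0}"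

definition dg_alpha :: "nat \<Rightarrow> real" where
  "dg_alpha l = (THE a. a \<in> dg_Aset l \<and> (\<forall>b\<in>dg_Aset l. \<bar>a\<bar> \<le> \<bar>b\<bar>) \<and>
                        (\<forall>b\<in>dg_Aset l. \<bar>b\<bar> = \<bar>a\<bar> \<longrightarrow> a \<le> b))"

definition dg_c :: "nat \<Rightarrow> 'v" where
  "dg_c l = dg_alpha l *\<^sub>R dg_w l"

definition dg_L :: nat where
  "dg_L = (if {l\<in>{1..rf x p K}. dg_lambda l > 1} = {} then 0
           else Max {l\<in>{1..rf x p K}. dg_lambda l > 1})"

definition dg_I0 :: "nat set" where
  "dg_I0 = {l\<in>{1..dg_L}. dg_alpha l \<noteq> 0}"

definition dg_I0list :: "nat list" where
  "dg_I0list = sorted_list_of_set dg_I0"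

definition dg_covz :: "nat \<Rightarrow> real mat" where
  "dg_covz k = mat (length dg_I0list) (length dg_I0list)
      (\<lambda>(a,b). inner (dg_z k (dg_I0list ! a)) (dg_z k (dg_I0list ! b)))"

definition dg_common :: "nat \<Rightarrow> nat \<Rightarrow> 'v" where
  "dg_common k i = (if dg_I0 = {} then 0 else
     (\<Sum>a<length dg_I0list. \<Sum>b<length dg_I0list.
        (inner (x k i) (dg_z k (dg_I0list ! a)) * pinv (dg_covz k) $$ (a,b))
          *\<^sub>R dg_c (dg_I0list ! b)))"

end

end

theory Submission
  imports Defs "Jordan_Normal_Form.Schur_Decomposition"
    "HOL-Computational_Algebra.Fundamental_Theorem_Algebra" "HOL-Analysis.Linear_Algebra"
begin

text \<open>Two admissible choices of the bases differ blockwise by orthogonal maps; assembled into a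
  block-diagonal orthogonal matrix \<open>T\<close> they give \<open>cov(f') = T cov(f) T\<^sup>T\<close>. Hence the eigenvalues,
  and with them \<open>L\<close>, do not depend on the choice, and \<open>T\<close> maps eigenvectors for \<open>f\<close> to
  eigenvectors for \<open>f'\<close>. As \<open>\<lambda>\<^sub>1, \<dots>, \<lambda>\<^sub>L\<close> are distinct and exceed \<open>1\<close>, each of them has a
  one-dimensional eigenspace (if \<open>\<lambda>\<^sub>L\<close> is a repeated root, the bound \<open>rank cov(f) \<le> r\<^sub>f\<close> rules out a
  second eigenvector), so \<open>\<eta>'\<^sup>(\<^sup>l\<^sup>) = \<plusminus>T \<eta>\<^sup>(\<^sup>l\<^sup>)\<close> for \<open>l \<le> L\<close>. Consequently all \<open>z\<^sub>k\<^sup>(\<^sup>l\<^sup>)\<close> and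
  \<open>w\<^sup>(\<^sup>l\<^sup>)\<close> change by one common sign \<open>s\<^sub>l\<close>. This leaves the orthogonality conditions defining
  \<open>\<alpha>\<^sup>(\<^sup>l\<^sup>)\<close>, hence \<open>\<alpha>\<^sup>(\<^sup>l\<^sup>)\<close> and \<open>I\<^sub>0\<close>, unchanged and flips \<open>c\<^sup>(\<^sup>l\<^sup>)\<close> by \<open>s\<^sub>l\<close>; \<open>cov(z\<^sub>k\<^sup>I\<^sup>0)\<close> and
  its pseudoinverse are conjugated by the diagonal sign matrix, and all signs cancel in \<open>c\<^sub>k\<close>.\<close>

section \<open>Real symmetric matrices\<close>

lemma cscalar_prod_real: fixes v w :: "real vec" shows "v \<bullet>c w = v \<bullet> w"
proof -
  have "conjugate w = w" by (rule eq_vecI) auto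
  thus ?thesis by simp
qed

lemma scalar_prod_self_pos:
  fixes v :: "real vec" assumes "v \<in> carrier_vec n" "v \<noteq> 0\<^sub>v n"
  shows "v \<bullet> v > 0"
proof -
  have "v \<bullet> v \<noteq> 0" using conjugate_square_eq_0_vec[OF assms(1)] assms cscalar_prod_real by metis
  moreover have "v \<bullet> v \<ge> 0" unfolding scalar_prod_def by (auto intro: sum_nonneg)
  ultimately show ?thesis by auto
qed

lemma scalar_prod_normalized_self:
  fixes w :: "real vec" assumes "w \<in> carrier_vec n" "w \<noteq> 0\<^sub>v n"
  shows "((1 / sqrt (w \<bullet> w)) \<cdot>\<^sub>v w) \<bullet> ((1 / sqrt (w \<bullet> w)) \<cdot>\<^sub>v w) = 1"
proof -
  have p: "w \<bullet> w > 0" by (rule scalar_prod_self_pos[OF assms])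
  have "((1 / sqrt (w \<bullet> w)) \<cdot>\<^sub>v w) \<bullet> ((1 / sqrt (w \<bullet> w)) \<cdot>\<^sub>v w) = (1 / sqrt (w \<bullet> w))^2 * (w \<bullet> w)"
    using assms by (simp add: power2_eq_square mult.assoc)
  also have "\<dots> = 1" using p by (simp add: power_divide)
  finally show ?thesis .
qed

lemma mat_mult_index_lessThan:
  "A \<in> carrier_mat n n \<Longrightarrow> B \<in> carrier_mat n n \<Longrightarrow> i < n \<Longrightarrow> j < n \<Longrightarrow>
   (A * B) $$ (i,j) = (\<Sum>k<n. A $$ (i,k) * B $$ (k,j))"
  by (auto simp: scalar_prod_def atLeast0LessThan intro!: sum.cong)

lemma mult_mat_vec_index_lessThan:
  "A \<in> carrier_mat n n \<Longrightarrow> v \<in> carrier_vec n \<Longrightarrow> i < n \<Longrightarrow>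
   (A *\<^sub>v v) $ i = (\<Sum>k<n. A $$ (i,k) * v $ k)"
  by (auto simp: scalar_prod_def atLeast0LessThan intro!: sum.cong)

lemma symmetric_real_mat_has_eigenvalue:
  fixes A :: "real mat"
  assumes A: "A \<in> carrier_mat n n" and sym: "\<And>i j. i < n \<Longrightarrow> j < n \<Longrightarrow> A $$ (i,j) = A $$ (j,i)"
    and n: "n > 0"
  shows "\<exists>e. eigenvalue A e"
proof -
  let ?C = "of_real_hom.mat_hom A :: complex mat"
  have C: "?C \<in> carrier_mat n n" using A by auto
  have cp: "char_poly ?C = map_poly of_real (char_poly A)" by (rule of_real_hom.char_poly_hom[OF A])
  have "degree (char_poly ?C) = n" using degree_monic_char_poly[OF C] by auto
  hence "\<not> constant (poly (char_poly ?C))" using n by (simp add: constant_degree)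
  then obtain k where k: "poly (char_poly ?C) k = 0" using fundamental_theorem_of_algebra by blast
  hence "eigenvalue ?C k" using eigenvalue_root_char_poly[OF C] by auto
  then obtain v where v: "v \<in> carrier_vec n" "v \<noteq> 0\<^sub>v n" and ev: "?C *\<^sub>v v = k \<cdot>\<^sub>v v"
    unfolding eigenvalue_def eigenvector_def using C by auto
  txt \<open>The Rayleigh quotient \<open>v\<^sup>* A v / v\<^sup>* v\<close> of a Hermitian matrix is real.\<close>
  have Cv: "(?C *\<^sub>v v) $ i = (\<Sum>j<n. of_real (A $$ (i,j)) * v $ j)" if "i < n" for i
    using that A v by (auto simp: scalar_prod_def row_def atLeast0LessThan intro!: sum.cong)
  define s where "s = (\<Sum>i<n. cnj (v $ i) * (?C *\<^sub>v v) $ i)"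
  define N where "N = (\<Sum>i<n. cnj (v $ i) * v $ i)"
  have s1: "s = k * N" unfolding s_def N_def ev using v by (auto simp: sum_distrib_left intro!: sum.cong)
  have s2: "s = (\<Sum>i<n. \<Sum>j<n. cnj (v $ i) * of_real (A $$ (i,j)) * v $ j)"
    unfolding s_def by (auto simp: Cv sum_distrib_left mult.assoc intro!: sum.cong)
  have "cnj s = (\<Sum>i<n. \<Sum>j<n. v $ i * of_real (A $$ (i,j)) * cnj (v $ j))"
    unfolding s2 by (simp add: cnj_sum)
  also have "\<dots> = (\<Sum>j<n. \<Sum>i<n. v $ i * of_real (A $$ (i,j)) * cnj (v $ j))"
    by (rule sum.swap)
  also have "\<dots> = s" unfolding s2 by (auto simp: sym mult.commute mult.left_commute intro!: sum.cong)
  finally have cs: "cnj s = s" .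
  have Nr: "N = of_real (\<Sum>i<n. (cmod (v $ i))\<^sup>2)"
    unfolding N_def of_real_sum by (intro sum.cong refl) (subst complex_norm_square, rule mult.commute)
  obtain i where i: "i < n" "v $ i \<noteq> 0" using v by (metis eq_vecI carrier_vecD index_zero_vec)
  have "(\<Sum>i<n. (cmod (v $ i))\<^sup>2) > 0"
    by (rule sum_pos2[of _ i], use i in auto)
  hence N0: "N \<noteq> 0" unfolding Nr by (simp del: of_real_sum of_real_power)
  have cN: "cnj N = N" unfolding Nr by (simp only: complex_cnj_complex_of_real)
  from cs s1 have "cnj k * N = k * N" using cN by simp
  hence "cnj k = k" using N0 by simp
  hence "k = of_real (Re k)" by (metis Reals_cnj_iff complex_is_Real_iff of_real_Re)
  hence "poly (char_poly A) (Re k) = 0"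
    using k unfolding cp by (metis of_real_eq_0_iff of_real_hom.poly_map_poly)
  thus ?thesis using eigenvalue_root_char_poly[OF A] by blast
qed

lemma orthogonal_mat_with_first_col:
  fixes u :: "real vec"
  assumes u: "u \<in> carrier_vec n" "u \<bullet> u = 1" and n: "n > 0"
  obtains W where "W \<in> carrier_mat n n" "transpose_mat W * W = 1\<^sub>m n" "W * transpose_mat W = 1\<^sub>m n"
    "col W 0 = u"
proof -
  have u0: "u \<noteq> 0\<^sub>v n" using u by auto
  interpret cof_vec_space n "TYPE(real)" .
  define b where "b = basis_completion u"
  from basis_completion[OF u(1) u0, folded b_def]
  have dist_b: "distinct b" and indep: "\<not> lin_dep (set b)" and b: "set b \<subseteq> carrier_vec n"
    and hdb: "hd b = u" and len_b: "length b = n" by auto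
  from hdb len_b n obtain vs where bv: "b = u # vs" by (cases b, auto)
  define ws where "ws = gram_schmidt n b"
  from gram_schmidt_result[OF b dist_b indep refl, folded ws_def]
  have ws: "set ws \<subseteq> carrier_vec n" "corthogonal ws" "length ws = n"
    by (auto simp: len_b)
  from gram_schmidt_hd[OF u(1), of vs, folded bv] have hdws: "hd ws = u" unfolding ws_def .
  define us where "us = map (\<lambda>w. (1 / sqrt (w \<bullet> w)) \<cdot>\<^sub>v w) ws"
  have wsc: "ws ! i \<in> carrier_vec n" if "i < n" for i using ws that by auto
  have ws0: "ws ! i \<noteq> 0\<^sub>v n" if "i < n" for i
  proof
    assume "ws ! i = 0\<^sub>v n"
    hence "ws ! i \<bullet>c ws ! i = 0" by simp
    thus False using corthogonalD[OF ws(2), of i i] that ws(3) by auto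
  qed
  have usc: "us ! i \<in> carrier_vec n" if "i < n" for i
    using wsc[OF that] that ws(3) unfolding us_def by auto
  have lus: "length us = n" unfolding us_def using ws by auto
  have orth: "us ! i \<bullet> us ! j = (if i = j then 1 else 0)" if "i < n" "j < n" for i j
  proof (cases "i = j")
    case True thus ?thesis using scalar_prod_normalized_self[OF wsc ws0, OF that(1)] that ws(3)
      unfolding us_def by auto
  next
    case False
    have "ws ! i \<bullet> ws ! j = 0" using corthogonalD[OF ws(2), of i j] that ws(3) False
      by (auto simp: cscalar_prod_real)
    thus ?thesis using False that ws(3) wsc[OF that(1)] wsc[OF that(2)] unfolding us_def
      by (simp add: scalar_prod_smult_distrib smult_scalar_prod_distrib)
  qed
  have us0: "us ! 0 = u"
  proof -
    have "ws ! 0 = u" using hdws ws(3) n by (cases ws, auto)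
    thus ?thesis using u ws(3) n unfolding us_def by auto
  qed
  define W where "W = mat_of_cols n us"
  have W: "W \<in> carrier_mat n n" unfolding W_def using lus by (metis mat_of_cols_carrier(1))
  have colW: "col W i = us ! i" if "i < n" for i unfolding W_def using that lus usc
    by (intro col_mat_of_cols) auto
  have WtW: "transpose_mat W * W = 1\<^sub>m n"
    by (rule eq_matI, insert W, auto simp: colW orth)
  have WWt: "W * transpose_mat W = 1\<^sub>m n"
    using mat_mult_left_right_inverse[OF _ W WtW] W by auto
  show thesis using that[OF W WtW WWt] colW[of 0] us0 n by simp
qed

lemma symmetric_mat_deflation:
  fixes A W :: "real mat"
  assumes A: "A \<in> carrier_mat (Suc m) (Suc m)" "transpose_mat A = A"
    and W: "W \<in> carrier_mat (Suc m) (Suc m)" "transpose_mat W * W = 1\<^sub>m (Suc m)"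
    and ev: "A *\<^sub>v col W 0 = e \<cdot>\<^sub>v col W 0"
  obtains A3 where "A3 \<in> carrier_mat m m" "transpose_mat A3 = A3"
    "transpose_mat W * A * W = four_block_mat (mat 1 1 (\<lambda>_. e)) (0\<^sub>m 1 m) (0\<^sub>m m 1) A3"
proof -
  define n where "n = Suc m"
  note A = A[folded n_def] and W = W[folded n_def]
  define A' where "A' = transpose_mat W * A * W"
  have A': "A' \<in> carrier_mat n n" unfolding A'_def using W A by auto
  have colW_orth: "col W i \<bullet> col W j = (if i = j then 1 else 0)" if "i < n" "j < n" for i j
  proof -
    have "col W i \<bullet> col W j = (transpose_mat W * W) $$ (i,j)" using W(1) that by simp
    also have "\<dots> = (if i = j then 1 else 0)" by (simp only: W(2) index_one_mat(1)[OF that])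
    finally show ?thesis .
  qed
  have A'ij: "A' $$ (i,j) = col W i \<bullet> (A *\<^sub>v col W j)" if "i < n" "j < n" for i j
  proof -
    have "A' $$ (i,j) = (transpose_mat W * (A * W)) $$ (i,j)" unfolding A'_def using W A by auto
    also have "\<dots> = col W i \<bullet> (A *\<^sub>v col W j)" using that W A by (auto simp: mult_mat_vec_def)
    finally show ?thesis .
  qed
  have A'sym: "transpose_mat A' = A'"
  proof -
    have "transpose_mat A' = transpose_mat W * transpose_mat (transpose_mat W * A)"
      unfolding A'_def by (rule transpose_mult[of _ n n _ n], insert W A, auto)
    also have "transpose_mat (transpose_mat W * A) = transpose_mat A * W"
      by (subst transpose_mult[of _ n n _ n], insert W A, auto)
    finally show ?thesis unfolding A'_def using A W by (simp add: assoc_mult_mat[of _ n n _ n _ n])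
  qed
  have A'col0: "A' $$ (i,0) = (if i = 0 then e else 0)" if "i < n" for i
    using that A'ij[OF that, of 0] colW_orth[OF that, of 0] W by (simp add: ev n_def)
  obtain A1 A2 A0 A3 where splitA': "split_block A' 1 1 = (A1,A2,A0,A3)"
    by (cases "split_block A' 1 1", auto)
  from A' have "dim_row A' = 1 + m" "dim_col A' = 1 + m" by (auto simp: n_def)
  from split_block[OF splitA' this] have A3: "A3 \<in> carrier_mat m m"
    and A'block: "A' = four_block_mat A1 A2 A0 A3" by auto
  have "A1 = mat 1 1 (\<lambda> _. e)"
    using splitA'[unfolded split_block_def Let_def] A'col0 A' n_def by auto
  moreover have "A2 = 0\<^sub>m 1 m"
  proof -
    have "A' $$ (0, Suc j) = 0" if "j < m" for j
      using arg_cong[OF A'sym, of "\<lambda>M. M $$ (0, Suc j)"] A'col0[of "Suc j"] A' that n_def by auto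
    thus ?thesis using splitA'[unfolded split_block_def Let_def] A' n_def
      by (auto intro!: eq_matI)
  qed
  moreover have "A0 = 0\<^sub>m m 1"
    using splitA'[unfolded split_block_def Let_def] A'col0 A' n_def by auto
  moreover have "transpose_mat A3 = A3"
    using splitA'[unfolded split_block_def Let_def] A' n_def A'sym
    by (auto intro!: eq_matI) (metis A' carrier_matD index_transpose_mat(1) Suc_less_eq)
  ultimately show thesis using that A3 A'block unfolding A'_def n_def by blast
qed

lemma real_symmetric_spectral:
  fixes A :: "real mat"
  assumes "A \<in> carrier_mat n n" "transpose_mat A = A"
  shows "\<exists>P D. P \<in> carrier_mat n n \<and> D \<in> carrier_mat n n \<and> diagonal_mat D \<and>
     P * transpose_mat P = 1\<^sub>m n \<and> transpose_mat P * P = 1\<^sub>m n \<and> A = P * D * transpose_mat P"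
  using assms
proof (induction n arbitrary: A)
  case 0
  thus ?case by (intro exI[of _ "1\<^sub>m 0"] exI[of _ A]) (auto simp: diagonal_mat_def)
next
  case (Suc m A)
  define n where "n = Suc m"
  have A: "A \<in> carrier_mat n n" "transpose_mat A = A" using Suc n_def by auto
  have "A $$ (i,j) = A $$ (j,i)" if "i < n" "j < n" for i j
    using A that by (metis carrier_matD index_transpose_mat(1))
  then obtain e where e: "eigenvalue A e" using symmetric_real_mat_has_eigenvalue[OF A(1)] n_def by auto
  define v where "v = find_eigenvector A e"
  have "eigenvector A v e" unfolding v_def by (rule find_eigenvector[OF A(1) e])
  hence v: "v \<in> carrier_vec n" "v \<noteq> 0\<^sub>v n" "A *\<^sub>v v = e \<cdot>\<^sub>v v"
    unfolding eigenvector_def using A by auto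
  define u where "u = (1 / sqrt (v \<bullet> v)) \<cdot>\<^sub>v v"
  have u: "u \<in> carrier_vec n" "u \<bullet> u = 1"
    unfolding u_def using v scalar_prod_normalized_self[OF v(1,2)] by auto
  have Au: "A *\<^sub>v u = e \<cdot>\<^sub>v u" unfolding u_def using v A
    by (simp add: mult_mat_vec smult_smult_assoc mult.commute)
  obtain W where W: "W \<in> carrier_mat n n" "transpose_mat W * W = 1\<^sub>m n" "W * transpose_mat W = 1\<^sub>m n"
    and W0: "col W 0 = u"
    using orthogonal_mat_with_first_col[OF u] n_def by blast
  obtain A3 where A3: "A3 \<in> carrier_mat m m" "transpose_mat A3 = A3"
    and WAW: "transpose_mat W * A * W = four_block_mat (mat 1 1 (\<lambda>_. e)) (0\<^sub>m 1 m) (0\<^sub>m m 1) A3"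
    using symmetric_mat_deflation[of A m W e] A W Au W0 n_def by auto
  from Suc.IH[OF A3] obtain P3 D3 where P3: "P3 \<in> carrier_mat m m" and D3: "D3 \<in> carrier_mat m m"
    and dD3: "diagonal_mat D3" and PP3: "P3 * transpose_mat P3 = 1\<^sub>m m"
    and A3eq: "A3 = P3 * D3 * transpose_mat P3" by blast
  define E1 :: "real mat" where "E1 = mat 1 1 (\<lambda>_. e)"
  define Pb where "Pb = four_block_mat (1\<^sub>m 1) (0\<^sub>m 1 m) (0\<^sub>m m 1) P3"
  define Db where "Db = four_block_mat E1 (0\<^sub>m 1 m) (0\<^sub>m m 1) D3"
  have E1: "E1 \<in> carrier_mat 1 1" unfolding E1_def by auto
  have Pb: "Pb \<in> carrier_mat n n" unfolding Pb_def n_def using P3 by auto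
  have Db: "Db \<in> carrier_mat n n" unfolding Db_def n_def using D3 E1 by auto
  have tPb: "transpose_mat Pb = four_block_mat (1\<^sub>m 1) (0\<^sub>m 1 m) (0\<^sub>m m 1) (transpose_mat P3)"
    unfolding Pb_def by (subst transpose_four_block_mat[of _ 1 1 _ m _ m], insert P3, auto)
  have PPb: "Pb * transpose_mat Pb = 1\<^sub>m n" unfolding tPb unfolding Pb_def
    by (subst mult_four_block_mat[of _ 1 1 _ m _ m _ _ 1 _ m], insert P3 PP3, auto simp: n_def)
  have "Pb * Db * transpose_mat Pb = four_block_mat E1 (0\<^sub>m 1 m) (0\<^sub>m m 1) (P3 * D3 * transpose_mat P3)"
    unfolding tPb unfolding Pb_def Db_def
    by (subst mult_four_block_mat[of _ 1 1 _ m _ m _ _ 1 _ m], insert P3 D3 E1, auto,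
        subst mult_four_block_mat[of _ 1 1 _ m _ m _ _ 1 _ m], insert P3 D3 E1, auto)
  hence WAW': "transpose_mat W * A * W = Pb * Db * transpose_mat Pb"
    unfolding WAW A3eq E1_def by simp
  have dDb: "diagonal_mat Db" unfolding diagonal_mat_def Db_def using dD3 D3 E1
    by (auto simp: diagonal_mat_def E1_def)
  define P where "P = W * Pb"
  have P: "P \<in> carrier_mat n n" unfolding P_def using W Pb by auto
  have tP: "transpose_mat P = transpose_mat Pb * transpose_mat W"
    unfolding P_def by (rule transpose_mult[OF W(1) Pb])
  have "P * transpose_mat P = W * (Pb * transpose_mat Pb) * transpose_mat W"
    unfolding tP unfolding P_def using W Pb by (simp add: assoc_mult_mat[of _ n n _ n _ n])
  hence PP: "P * transpose_mat P = 1\<^sub>m n" using PPb W by simp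
  have PP': "transpose_mat P * P = 1\<^sub>m n" using mat_mult_left_right_inverse[OF P _ PP] P by auto
  have "A = (W * transpose_mat W) * A * (W * transpose_mat W)" unfolding W(3) using A(1) by simp
  also have "\<dots> = W * (transpose_mat W * A * W) * transpose_mat W"
    using W(1) A(1) by (simp add: assoc_mult_mat[of _ n n _ n _ n])
  also have "\<dots> = P * Db * transpose_mat P" unfolding WAW' tP unfolding P_def using W Pb Db
    by (simp add: assoc_mult_mat[of _ n n _ n _ n])
  finally show ?case using P Db dDb PP PP' unfolding n_def by blast
qed

lemma proots_prod_list_linear: "proots (\<Prod>a\<leftarrow>ds. [:- a, 1:]) = mset (ds :: real list)"
proof (induction ds)
  case (Cons a ds)
  have "(\<Prod>a\<leftarrow>ds. [:- a, 1:]) \<noteq> (0 :: real poly)"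
    by (auto simp: prod_list_zero_iff)
  hence "proots ([:- a, 1:] * (\<Prod>a\<leftarrow>ds. [:- a, 1:])) = proots [:- a, 1:] + mset ds"
    using Cons by (subst proots_mult) auto
  thus ?case by (simp only: prod_list.Cons list.map proots_linear_factor minus_minus) simp
qed simp

lemma proots_char_poly_diagonalization:
  fixes A :: "real mat"
  assumes "P \<in> carrier_mat n n" "D \<in> carrier_mat n n" "diagonal_mat D"
    "P * transpose_mat P = 1\<^sub>m n" "transpose_mat P * P = 1\<^sub>m n" "A = P * D * transpose_mat P"
  shows "proots (char_poly A) = mset (diag_mat D)"
proof -
  have "similar_mat A D" unfolding similar_mat_def similar_mat_wit_def Let_def
    using assms by (intro exI[of _ P] exI[of _ "transpose_mat P"]) auto
  hence "char_poly A = char_poly D" by (rule char_poly_similar)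
  also have "\<dots> = (\<Prod>a\<leftarrow>diag_mat D. [:- a, 1:])"
    using assms by (intro char_poly_upper_triangular) (auto simp: upper_triangular_def diagonal_mat_def)
  finally show ?thesis by (simp add: proots_prod_list_linear)
qed

lemma size_proots_char_poly_symmetric:
  fixes A :: "real mat"
  assumes "A \<in> carrier_mat n n" "transpose_mat A = A"
  shows "size (proots (char_poly A)) = n"
proof -
  from real_symmetric_spectral[OF assms] obtain P D where "P \<in> carrier_mat n n"
    "D \<in> carrier_mat n n" "diagonal_mat D" "P * transpose_mat P = 1\<^sub>m n"
    "transpose_mat P * P = 1\<^sub>m n" "A = P * D * transpose_mat P" by blast
  thus ?thesis by (simp add: proots_char_poly_diagonalization diag_mat_def)
qed

lemma diagonalization_eigenvector_coord:
  fixes A :: "real mat"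
  assumes P: "P \<in> carrier_mat n n" "transpose_mat P * P = 1\<^sub>m n" "P * transpose_mat P = 1\<^sub>m n"
    and D: "D \<in> carrier_mat n n" "diagonal_mat D" and AE: "A = P * D * transpose_mat P"
    and x: "x \<in> carrier_vec n" "A *\<^sub>v x = e \<cdot>\<^sub>v x" and i: "i < n" "D $$ (i,i) \<noteq> e"
  shows "(transpose_mat P *\<^sub>v x) $ i = 0"
proof -
  define w where "w = transpose_mat P *\<^sub>v x"
  have Pt: "transpose_mat P \<in> carrier_mat n n" using P by auto
  have w: "w \<in> carrier_vec n" unfolding w_def using Pt x by auto
  have PPy: "transpose_mat P *\<^sub>v (P *\<^sub>v y) = y" if "y \<in> carrier_vec n" for y
    using assoc_mult_mat_vec[OF Pt P(1) that, symmetric] P(2) that by simp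
  have Ax: "A *\<^sub>v x = P *\<^sub>v (D *\<^sub>v w)" unfolding AE w_def using P D Pt x
    by (simp add: assoc_mult_mat_vec[of _ n n _ n])
  have "D *\<^sub>v w = transpose_mat P *\<^sub>v (A *\<^sub>v x)" unfolding Ax using D w by (simp add: PPy)
  also have "\<dots> = e \<cdot>\<^sub>v w" unfolding x(2) w_def using Pt x by (simp add: mult_mat_vec)
  finally have Dw: "D *\<^sub>v w = e \<cdot>\<^sub>v w" .
  have "(D *\<^sub>v w) $ i = (\<Sum>k<n. D $$ (i,k) * w $ k)" by (rule mult_mat_vec_index_lessThan[OF D(1) w i(1)])
  also have "\<dots> = (\<Sum>k<n. if k = i then D $$ (i,i) * w $ i else 0)"
    by (rule sum.cong, insert D i, auto simp: diagonal_mat_def)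
  finally have "D $$ (i,i) * w $ i = e * w $ i" using Dw w i by simp
  thus ?thesis using i unfolding w_def by auto
qed

lemma simple_eigenvalue_eigenvector_unique:
  fixes A :: "real mat"
  assumes A: "A \<in> carrier_mat n n" "transpose_mat A = A"
    and simple: "count (proots (char_poly A)) e \<le> 1"
    and u: "u \<in> carrier_vec n" "A *\<^sub>v u = e \<cdot>\<^sub>v u" "u \<noteq> 0\<^sub>v n"
    and v: "v \<in> carrier_vec n" "A *\<^sub>v v = e \<cdot>\<^sub>v v"
  shows "\<exists>c. v = c \<cdot>\<^sub>v u"
proof -
  from real_symmetric_spectral[OF A] obtain P D where P: "P \<in> carrier_mat n n"
    and D: "D \<in> carrier_mat n n" "diagonal_mat D"
    and PP: "P * transpose_mat P = 1\<^sub>m n" and PP': "transpose_mat P * P = 1\<^sub>m n"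
    and AE: "A = P * D * transpose_mat P" by blast
  note coord = diagonalization_eigenvector_coord[OF P PP' PP D AE]
  have Pt: "transpose_mat P \<in> carrier_mat n n" using P by auto
  have uniq: "i = j" if "i < n" "j < n" "D $$ (i,i) = e" "D $$ (j,j) = e" for i j
  proof (rule ccontr)
    assume ij: "i \<noteq> j"
    have "count (mset (diag_mat D)) e = card {k. k < n \<and> D $$ (k,k) = e}"
      unfolding count_mset count_list_eq_length_filter length_filter_conv_card diag_mat_def using D
      by (auto intro!: arg_cong[where f=card])
    also have "\<dots> \<ge> card {i, j}"
      by (rule card_mono) (auto simp: that)
    finally show False using ij simple proots_char_poly_diagonalization[OF P D PP PP' AE] by simp
  qed
  define wu where "wu = transpose_mat P *\<^sub>v u"
  define wv where "wv = transpose_mat P *\<^sub>v v"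
  have wuc: "wu \<in> carrier_vec n" "wv \<in> carrier_vec n" unfolding wu_def wv_def using Pt u v by auto
  have uw: "u = P *\<^sub>v wu" "v = P *\<^sub>v wv" unfolding wu_def wv_def using P Pt u v PP
    by (metis assoc_mult_mat_vec one_mult_mat_vec)+
  have "wu \<noteq> 0\<^sub>v n" using u uw P by auto
  then obtain i0 where i0: "i0 < n" "wu $ i0 \<noteq> 0" using wuc by (metis eq_vecI carrier_vecD index_zero_vec)
  have Di0: "D $$ (i0,i0) = e" using coord[OF u(1,2) i0(1)] i0 unfolding wu_def by auto
  define c where "c = wv $ i0 / wu $ i0"
  have "wv = c \<cdot>\<^sub>v wu"
  proof (rule eq_vecI)
    fix i assume "i < dim_vec (c \<cdot>\<^sub>v wu)"
    hence i: "i < n" using wuc by auto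
    show "wv $ i = (c \<cdot>\<^sub>v wu) $ i"
    proof (cases "i = i0")
      case True thus ?thesis using i0 i wuc unfolding c_def by auto
    next
      case False
      hence "D $$ (i,i) \<noteq> e" using uniq[OF i i0(1) _ Di0] by auto
      hence "wu $ i = 0" "wv $ i = 0" using coord[OF u(1,2) i] coord[OF v i] unfolding wu_def wv_def by auto
      thus ?thesis using i wuc by simp
    qed
  qed (use wuc in auto)
  hence "v = c \<cdot>\<^sub>v u" unfolding uw using P wuc by (simp add: mult_mat_vec)
  thus ?thesis by blast
qed

lemma symmetric_mat_scalar_prod_swap:
  fixes G :: "'a::comm_semiring_0 mat"
  assumes G: "G \<in> carrier_mat n n" "transpose_mat G = G" and u: "u \<in> carrier_vec n" and v: "v \<in> carrier_vec n"
  shows "u \<bullet> (G *\<^sub>v v) = v \<bullet> (G *\<^sub>v u)"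
proof -
  have "u \<bullet> (G *\<^sub>v v) = (G *\<^sub>v u) \<bullet> v"
    using transpose_vec_mult_scalar[OF G(1) v u] G(2) by simp
  also have "\<dots> = v \<bullet> (G *\<^sub>v u)" using G u v by (intro comm_scalar_prod[of _ n]) auto
  finally show ?thesis .
qed

text \<open>For positive semidefinite \<open>G\<close> this says \<open>rank G \<le> R\<close>.\<close>
definition orthogonal_family_bound :: "real mat \<Rightarrow> nat \<Rightarrow> nat \<Rightarrow> bool" where
  "orthogonal_family_bound G n R \<longleftrightarrow> (\<forall>V. finite V \<longrightarrow> V \<subseteq> carrier_vec n \<longrightarrow>
     (\<forall>u\<in>V. \<forall>v\<in>V. u \<noteq> v \<longrightarrow> u \<bullet> (G *\<^sub>v v) = 0) \<longrightarrow> (\<forall>u\<in>V. u \<bullet> (G *\<^sub>v u) \<noteq> 0) \<longrightarrow>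
     card V \<le> R)"

lemma eigenvector_orthogonal_to_eigenbasis_zero:
  fixes G :: "real mat" and E :: "nat \<Rightarrow> real vec" and \<mu> :: "nat \<Rightarrow> real"
  assumes G: "G \<in> carrier_mat n n" "transpose_mat G = G"
    and E: "\<And>l. l \<in> {1..R} \<Longrightarrow> E l \<in> carrier_vec n \<and> G *\<^sub>v E l = \<mu> l \<cdot>\<^sub>v E l"
    and Eo: "\<And>l l'. l \<in> {1..R} \<Longrightarrow> l' \<in> {1..R} \<Longrightarrow> E l \<bullet> E l' = (if l = l' then 1 else 0)"
    and pos: "\<And>l. l \<in> {1..R} \<Longrightarrow> \<mu> l > 0"
    and bound: "orthogonal_family_bound G n R"
    and w: "w \<in> carrier_vec n" "G *\<^sub>v w = m \<cdot>\<^sub>v w" "m > 0"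
    and wE: "\<And>l. l \<in> {1..R} \<Longrightarrow> w \<bullet> E l = 0"
  shows "w = 0\<^sub>v n"
proof (rule ccontr)
  assume w0: "w \<noteq> 0\<^sub>v n"
  define V where "V = insert w (E ` {1..R})"
  have Ew: "E l \<bullet> w = 0" if "l \<in> {1..R}" for l
    using wE[OF that] E[OF that] w by (simp add: comm_scalar_prod[of _ n])
  have "w \<noteq> E l" if "l \<in> {1..R}" for l using wE[OF that] Eo[OF that that] by auto
  hence "w \<notin> E ` {1..R}" by blast
  moreover have "inj_on E {1..R}" by (rule inj_onI) (metis Eo zero_neq_one)
  ultimately have "card V = R + 1" unfolding V_def by (simp add: card_image)
  moreover have "card V \<le> R"
  proof (rule bound[unfolded orthogonal_family_bound_def, rule_format (no_asm)])
    show "finite V" "V \<subseteq> carrier_vec n" unfolding V_def using w E by auto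
    have EGE: "E a \<bullet> (G *\<^sub>v E b) = (if a = b then \<mu> b else 0)" if "a \<in> {1..R}" "b \<in> {1..R}" for a b
      using E[OF that(1)] E[OF that(2)] Eo[OF that] by (auto simp: scalar_prod_smult_distrib[of "E a" n])
    have wGE: "w \<bullet> (G *\<^sub>v E b) = 0" if "b \<in> {1..R}" for b
      using E[OF that] wE[OF that] w by simp
    have EGw: "E a \<bullet> (G *\<^sub>v w) = 0" if "a \<in> {1..R}" for a
      using E[OF that] Ew[OF that] w by simp
    have "w \<bullet> (G *\<^sub>v w) = m * (w \<bullet> w)" using w by simp
    hence wGw: "w \<bullet> (G *\<^sub>v w) \<noteq> 0" using w scalar_prod_self_pos[OF w(1) w0] by simp
    have "E a \<bullet> (G *\<^sub>v E b) = 0" if "a \<in> {1..R}" "b \<in> {1..R}" "E a \<noteq> E b" for a b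
      using EGE[OF that(1,2)] that(3) by auto
    thus "\<forall>a\<in>V. \<forall>b\<in>V. a \<noteq> b \<longrightarrow> a \<bullet> (G *\<^sub>v b) = 0"
      unfolding V_def using wGE EGw by blast
    have "E a \<bullet> (G *\<^sub>v E a) \<noteq> 0" if "a \<in> {1..R}" for a
      using EGE[OF that that] pos[OF that] by simp
    thus "\<forall>a\<in>V. a \<bullet> (G *\<^sub>v a) \<noteq> 0"
      unfolding V_def using wGw by blast
  qed
  ultimately show False by simp
qed

lemma eigenvector_unique_of_orthogonal_bound:
  fixes G :: "real mat" and E :: "nat \<Rightarrow> real vec" and \<mu> :: "nat \<Rightarrow> real"
  assumes G: "G \<in> carrier_mat n n" "transpose_mat G = G"
    and E: "\<And>l. l \<in> {1..R} \<Longrightarrow> E l \<in> carrier_vec n \<and> G *\<^sub>v E l = \<mu> l \<cdot>\<^sub>v E l"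
    and Eo: "\<And>l l'. l \<in> {1..R} \<Longrightarrow> l' \<in> {1..R} \<Longrightarrow> E l \<bullet> E l' = (if l = l' then 1 else 0)"
    and pos: "\<And>l. l \<in> {1..R} \<Longrightarrow> \<mu> l > 0"
    and dist: "\<And>l l'. l \<in> {1..R} \<Longrightarrow> l' \<in> {1..R} \<Longrightarrow> l \<noteq> l' \<Longrightarrow> \<mu> l \<noteq> \<mu> l'"
    and bound: "orthogonal_family_bound G n R"
    and l: "l \<in> {1..R}" and u: "u \<in> carrier_vec n" "G *\<^sub>v u = \<mu> l \<cdot>\<^sub>v u" "u \<noteq> 0\<^sub>v n"
  shows "\<exists>c. E l = c \<cdot>\<^sub>v u"
proof -
  note El = E[OF l]
  define c where "c = u \<bullet> E l"
  define w where "w = u - c \<cdot>\<^sub>v E l"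
  have wc: "w \<in> carrier_vec n" unfolding w_def using u El by auto
  have Gw: "G *\<^sub>v w = \<mu> l \<cdot>\<^sub>v w" unfolding w_def using G u El
    by (simp add: mult_minus_distrib_mat_vec mult_mat_vec) (rule eq_vecI, auto simp: algebra_simps)
  have wE: "w \<bullet> E b = 0" if b: "b \<in> {1..R}" for b
  proof (cases "b = l")
    case True thus ?thesis unfolding w_def c_def using u El Eo[OF l l]
      by (simp add: minus_scalar_prod_distrib)
  next
    case False
    have "\<mu> l * (w \<bullet> E b) = E b \<bullet> (G *\<^sub>v w)"
      unfolding Gw using wc E[OF b] by (simp add: comm_scalar_prod[of _ n])
    also have "\<dots> = w \<bullet> (G *\<^sub>v E b)"
      using symmetric_mat_scalar_prod_swap[OF G, of "E b" w] wc E[OF b] by simp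
    also have "\<dots> = \<mu> b * (w \<bullet> E b)" using E[OF b] wc by simp
    finally have "(\<mu> l - \<mu> b) * (w \<bullet> E b) = 0" by (simp add: algebra_simps)
    thus ?thesis using dist[OF l b] False by auto
  qed
  have w0: "w = 0\<^sub>v n"
    by (rule eigenvector_orthogonal_to_eigenbasis_zero[OF G E Eo pos bound wc Gw pos[OF l] wE])
  have "u = c \<cdot>\<^sub>v E l"
  proof (rule eq_vecI)
    fix i assume "i < dim_vec (c \<cdot>\<^sub>v E l)"
    hence i: "i < n" using El by auto
    have "w $ i = 0" using w0 i by simp
    thus "u $ i = (c \<cdot>\<^sub>v E l) $ i" using i u El unfolding w_def by auto
  qed (use u El in auto)
  moreover from this have "c \<noteq> 0" using u(3) El by auto
  ultimately have "E l = (1 / c) \<cdot>\<^sub>v u" using El by (auto simp: smult_smult_assoc)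
  thus ?thesis by blast
qed

lemma sorted_desc_repeated_neighbor:
  fixes xs :: "'a::linorder list"
  assumes sw: "sorted_wrt (\<ge>) xs" and i: "i < length xs" and c: "count (mset xs) (xs ! i) \<ge> 2"
  shows "(0 < i \<and> xs ! (i - 1) = xs ! i) \<or> (Suc i < length xs \<and> xs ! Suc i = xs ! i)"
proof -
  have mono: "xs ! k \<le> xs ! j" if "j < k" "k < length xs" for j k
    using sw that by (auto simp: sorted_wrt_iff_nth_less)
  have "count (mset xs) (xs ! i) = card {k. k < length xs \<and> xs ! k = xs ! i}"
    unfolding count_mset count_list_eq_length_filter length_filter_conv_card
    by (auto intro!: arg_cong[where f=card])
  with c have cg: "card {k. k < length xs \<and> xs ! k = xs ! i} \<ge> 2" by simp
  have "\<not> {k. k < length xs \<and> xs ! k = xs ! i} \<subseteq> {i}"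
  proof
    assume "{k. k < length xs \<and> xs ! k = xs ! i} \<subseteq> {i}"
    hence "card {k. k < length xs \<and> xs ! k = xs ! i} \<le> card {i}" by (intro card_mono) auto
    with cg show False by simp
  qed
  then obtain j where j: "j < length xs" "xs ! j = xs ! i" "j \<noteq> i" by blast
  show ?thesis
  proof (cases "j < i")
    case True
    have "xs ! (i - 1) \<le> xs ! j" using mono[of j "i - 1"] True i by (cases "j = i - 1") auto
    moreover have "xs ! i \<le> xs ! (i - 1)" using mono[of "i - 1" i] True i by auto
    ultimately show ?thesis using True j by auto
  next
    case False
    hence ij: "i < j" using j by auto
    have "xs ! j \<le> xs ! Suc i" using mono[of "Suc i" j] ij j by (cases "j = Suc i") auto
    moreover have "xs ! Suc i \<le> xs ! i" using mono[of i "Suc i"] ij j by auto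
    ultimately show ?thesis using ij j by auto
  qed
qed

lemma eigval_antimono:
  assumes sz: "size (proots (char_poly A)) = n" and ab: "1 \<le> a" "a \<le> b" "b \<le> n"
  shows "eigval A b \<le> eigval A a"
proof -
  define xs where "xs = rev (sorted_list_of_multiset (proots (char_poly A)))"
  have len: "length xs = n" unfolding xs_def using sz
    by (metis length_rev mset_sorted_list_of_multiset size_mset)
  have "sorted_wrt (\<ge>) xs" unfolding xs_def by (simp add: sorted_wrt_rev)
  moreover have "a = b \<or> a - 1 < b - 1" using ab by auto
  ultimately show ?thesis using ab len unfolding eigval_def xs_def[symmetric]
    by (auto simp: sorted_wrt_iff_nth_less)
qed

text \<open>A repeated \<open>\<lambda>\<^sub>l\<close> with \<open>l \<le> L\<close> must equal a neighbour; distinctness leaves only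
  \<open>\<lambda>\<^bsub>l+1\<^esub>\<close>, which forces \<open>l = L\<close>, and then \<open>\<lambda>\<^bsub>L+1\<^esub> > 1\<close> forces \<open>L = R\<close>.\<close>
lemma eigval_repeated_is_last:
  assumes sz: "size (proots (char_poly A)) = n" and R: "R \<le> n"
    and L: "L \<le> R" "eigval A L > 1" and l: "l \<in> {1..L}"
    and max: "\<And>l. l \<in> {1..R} \<Longrightarrow> eigval A l > 1 \<Longrightarrow> l \<le> L"
    and dist: "\<And>l l'. l \<in> {1..L} \<Longrightarrow> l' \<in> {1..L} \<Longrightarrow> l \<noteq> l' \<Longrightarrow> eigval A l \<noteq> eigval A l'"
    and rep: "count (proots (char_poly A)) (eigval A l) \<ge> 2"
  shows "l = L \<and> L = R"
proof -
  define xs where "xs = rev (sorted_list_of_multiset (proots (char_poly A)))"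
  have len: "length xs = n" unfolding xs_def using sz
    by (metis length_rev mset_sorted_list_of_multiset size_mset)
  have ev: "eigval A j = xs ! (j - 1)" for j unfolding eigval_def xs_def ..
  have "mset xs = proots (char_poly A)" unfolding xs_def by simp
  with rep have c2: "count (mset xs) (xs ! (l - 1)) \<ge> 2" by (simp add: ev)
  have "sorted_wrt (\<ge>) xs" unfolding xs_def by (simp add: sorted_wrt_rev)
  from sorted_desc_repeated_neighbor[OF this _ c2] len l L R
  have "(0 < l - 1 \<and> eigval A (l - 1) = eigval A l) \<or> eigval A (l + 1) = eigval A l"
    by (auto simp: ev)
  moreover have "eigval A (l - 1) \<noteq> eigval A l" if "0 < l - 1"
  proof -
    have "l - 1 \<in> {1..L}" "l - 1 \<noteq> l" using that l by auto
    thus ?thesis using dist l by blast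
  qed
  ultimately have next_eq: "eigval A (l + 1) = eigval A l" by blast
  have "l = L"
  proof (rule ccontr)
    assume "l \<noteq> L" hence "l + 1 \<in> {1..L}" using l by auto
    thus False using dist[of "l + 1" l] next_eq l by auto
  qed
  moreover have "L = R"
  proof (rule ccontr)
    assume "L \<noteq> R" hence LR: "L + 1 \<in> {1..R}" using L l by auto
    have "eigval A (L + 1) > 1" using next_eq \<open>l = L\<close> L(2) by simp
    from max[OF LR this] show False by simp
  qed
  ultimately show ?thesis by simp
qed

lemma leading_eigenvector_unique:
  fixes G :: "real mat" and E :: "nat \<Rightarrow> real vec"
  assumes G: "G \<in> carrier_mat n n" "transpose_mat G = G"
    and E: "\<And>l. l \<in> {1..R} \<Longrightarrow> E l \<in> carrier_vec n \<and> G *\<^sub>v E l = eigval G l \<cdot>\<^sub>v E l"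
    and Eo: "\<And>l l'. l \<in> {1..R} \<Longrightarrow> l' \<in> {1..R} \<Longrightarrow> E l \<bullet> E l' = (if l = l' then 1 else 0)"
    and R: "R \<le> n" and L: "1 \<le> L" "L \<le> R" "eigval G L > 1"
    and max: "\<And>l. l \<in> {1..R} \<Longrightarrow> eigval G l > 1 \<Longrightarrow> l \<le> L"
    and dist: "\<And>l l'. l \<in> {1..L} \<Longrightarrow> l' \<in> {1..L} \<Longrightarrow> l \<noteq> l' \<Longrightarrow> eigval G l \<noteq> eigval G l'"
    and bound: "orthogonal_family_bound G n R"
    and l: "l \<in> {1..L}" and u: "u \<in> carrier_vec n" "G *\<^sub>v u = eigval G l \<cdot>\<^sub>v u" "u \<noteq> 0\<^sub>v n"
  shows "\<exists>c. E l = c \<cdot>\<^sub>v u"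
proof -
  have lR: "l \<in> {1..R}" using l L by auto
  show ?thesis
  proof (cases "count (proots (char_poly G)) (eigval G l) \<le> 1")
    case True
    have El: "E l \<in> carrier_vec n" "G *\<^sub>v E l = eigval G l \<cdot>\<^sub>v E l" using E[OF lR] by auto
    show ?thesis by (rule simple_eigenvalue_eigenvector_unique[OF G True u El])
  next
    case False
    hence rep: "count (proots (char_poly G)) (eigval G l) \<ge> 2" by simp
    have sz: "size (proots (char_poly G)) = n" by (rule size_proots_char_poly_symmetric[OF G])
    have "l = L \<and> L = R"
      by (rule eigval_repeated_is_last[OF sz R L(2,3) l max dist rep])
    hence LR: "L = R" by simp
    have pos: "eigval G b > 0" if "b \<in> {1..R}" for b
      using eigval_antimono[OF sz, of b L] that L R LR by auto
    have distR: "eigval G a \<noteq> eigval G b" if "a \<in> {1..R}" "b \<in> {1..R}" "a \<noteq> b" for a b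
    proof -
      have "a \<in> {1..L}" "b \<in> {1..L}" using that LR by auto
      thus ?thesis using dist that(3) by blast
    qed
    show ?thesis by (rule eigenvector_unique_of_orthogonal_bound[OF G E Eo pos distR bound lR u])
  qed
qed

lemma eigval_orthogonal_conj:
  fixes A T :: "real mat"
  assumes A: "A \<in> carrier_mat n n" and T: "T \<in> carrier_mat n n"
    and TT: "transpose_mat T * T = 1\<^sub>m n" "T * transpose_mat T = 1\<^sub>m n"
  shows "eigval (T * A * transpose_mat T) = eigval A"
proof -
  have "similar_mat (T * A * transpose_mat T) A" unfolding similar_mat_def similar_mat_wit_def Let_def
    using A T TT by (intro exI[of _ T] exI[of _ "transpose_mat T"]) auto
  thus ?thesis unfolding eigval_def[abs_def] by (simp add: char_poly_similar)
qed

lemma orthogonal_conj_eigenvector: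
  fixes A T :: "real mat"
  assumes A: "A \<in> carrier_mat n n" and T: "T \<in> carrier_mat n n" and TT: "transpose_mat T * T = 1\<^sub>m n"
    and v: "v \<in> carrier_vec n" "A *\<^sub>v v = e \<cdot>\<^sub>v v"
  shows "(T * A * transpose_mat T) *\<^sub>v (T *\<^sub>v v) = e \<cdot>\<^sub>v (T *\<^sub>v v)"
    and "(T *\<^sub>v v) \<bullet> (T *\<^sub>v v) = v \<bullet> v"
proof -
  have Tt: "transpose_mat T \<in> carrier_mat n n" using T by auto
  have TTv: "transpose_mat T *\<^sub>v (T *\<^sub>v v) = v"
    using assoc_mult_mat_vec[OF Tt T v(1), symmetric] TT v by simp
  have "(T * A * transpose_mat T) *\<^sub>v (T *\<^sub>v v) = T *\<^sub>v (A *\<^sub>v (transpose_mat T *\<^sub>v (T *\<^sub>v v)))"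
    using T A Tt v by (simp add: assoc_mult_mat_vec[of _ n n _ n])
  thus "(T * A * transpose_mat T) *\<^sub>v (T *\<^sub>v v) = e \<cdot>\<^sub>v (T *\<^sub>v v)"
    unfolding TTv v(2) using T v by (simp add: mult_mat_vec)
  show "(T *\<^sub>v v) \<bullet> (T *\<^sub>v v) = v \<bullet> v"
    using transpose_vec_mult_scalar[OF T v(1), of "T *\<^sub>v v"] TTv T v by simp
qed

section \<open>Moore--Penrose pseudoinverse\<close>

definition is_pinv :: "real mat \<Rightarrow> real mat \<Rightarrow> bool" where
  "is_pinv A X \<longleftrightarrow> X \<in> carrier_mat (dim_col A) (dim_row A) \<and>
      A * X * A = A \<and> X * A * X = X \<and>
      transpose_mat (A * X) = A * X \<and> transpose_mat (X * A) = X * A"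

lemma is_pinv_unique:
  assumes A: "A \<in> carrier_mat m m" and X: "is_pinv A X" and Y: "is_pinv A Y"
  shows "X = Y"
proof -
  note T = transpose_mult[of _ m m _ m]
  from X A have Xc: "X \<in> carrier_mat m m" and X1: "A * X * A = A" and X2: "X * A * X = X"
    and X3: "transpose_mat (A * X) = A * X" and X4: "transpose_mat (X * A) = X * A"
    unfolding is_pinv_def by auto
  from Y A have Yc: "Y \<in> carrier_mat m m" and Y1: "A * Y * A = A" and Y2: "Y * A * Y = Y"
    and Y3: "transpose_mat (A * Y) = A * Y" and Y4: "transpose_mat (Y * A) = Y * A"
    unfolding is_pinv_def by auto
  have TX: "transpose_mat X \<in> carrier_mat m m" "transpose_mat Y \<in> carrier_mat m m"
     "transpose_mat A \<in> carrier_mat m m" using Xc Yc A by auto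
  have "X = X * (A * X)" using X2 Xc A by (simp add: assoc_mult_mat[of _ m m _ m _ m])
  also have "\<dots> = X * transpose_mat (A * X)" using X3 by simp
  also have "\<dots> = X * (transpose_mat X * transpose_mat A)" using T[OF A Xc] by simp
  also have "transpose_mat A = transpose_mat (A * Y * A)" using Y1 by simp
  also have "\<dots> = transpose_mat A * (transpose_mat Y * transpose_mat A)"
    using A Yc by (simp add: T assoc_mult_mat[of _ m m _ m _ m])
  also have "X * (transpose_mat X * (transpose_mat A * (transpose_mat Y * transpose_mat A)))
     = X * ((transpose_mat X * transpose_mat A) * (transpose_mat Y * transpose_mat A))"
    using Xc TX by (simp add: assoc_mult_mat[of _ m m _ m _ m])
  also have "\<dots> = X * (transpose_mat (A * X) * transpose_mat (A * Y))"
    by (simp add: T[OF A Xc] T[OF A Yc])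
  also have "\<dots> = X * A * X * A * Y" unfolding X3 Y3 using Xc Yc A
    by (simp add: assoc_mult_mat[of _ m m _ m _ m])
  also have "\<dots> = X * A * Y" unfolding X2 ..
  finally have XAY: "X = X * A * Y" .
  have "Y = (Y * A) * Y" using Y2 Yc A by (simp add: assoc_mult_mat[of _ m m _ m _ m])
  also have "\<dots> = transpose_mat (Y * A) * Y" using Y4 by simp
  also have "\<dots> = (transpose_mat A * transpose_mat Y) * Y" using T[OF Yc A] by simp
  also have "transpose_mat A = transpose_mat (A * X * A)" using X1 by simp
  also have "\<dots> = (transpose_mat A * transpose_mat X) * transpose_mat A"
    using A Xc by (simp add: T assoc_mult_mat[of _ m m _ m _ m])
  also have "((transpose_mat A * transpose_mat X) * transpose_mat A) * transpose_mat Y * Y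
     = ((transpose_mat A * transpose_mat X) * (transpose_mat A * transpose_mat Y)) * Y"
    using Xc TX by (simp add: assoc_mult_mat[of _ m m _ m _ m])
  also have "\<dots> = (transpose_mat (X * A) * transpose_mat (Y * A)) * Y"
    by (simp add: T[OF Xc A] T[OF Yc A])
  also have "\<dots> = X * A * (Y * A * Y)" unfolding X4 Y4 using Xc Yc A
    by (simp add: assoc_mult_mat[of _ m m _ m _ m])
  also have "\<dots> = X * A * Y" unfolding Y2 ..
  finally show ?thesis using XAY by simp
qed

lemma is_pinv_orthogonal_conj:
  assumes A: "A \<in> carrier_mat m m" and P: "P \<in> carrier_mat m m"
    and PP: "transpose_mat P * P = 1\<^sub>m m" and X: "is_pinv A X"
  shows "is_pinv (P * A * transpose_mat P) (P * X * transpose_mat P)"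
proof -
  note T = transpose_mult[of _ m m _ m] and as = assoc_mult_mat[of _ m m _ m _ m]
  from X A have Xc: "X \<in> carrier_mat m m" and X1: "A * X * A = A" and X2: "X * A * X = X"
    and X3: "transpose_mat (A * X) = A * X" and X4: "transpose_mat (X * A) = X * A"
    unfolding is_pinv_def by auto
  have Pt: "transpose_mat P \<in> carrier_mat m m" using P by auto
  have cancel: "P * M * transpose_mat P * (P * N * transpose_mat P) = P * (M * N) * transpose_mat P"
    if "M \<in> carrier_mat m m" "N \<in> carrier_mat m m" for M N
    using that P PP by (simp add: as, simp add: as[symmetric, of "transpose_mat P" P] Pt)
  have tr: "transpose_mat (P * M * transpose_mat P) = P * transpose_mat M * transpose_mat P"
    if "M \<in> carrier_mat m m" for M
    using that P Pt by (simp add: T as)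
  show ?thesis unfolding is_pinv_def
    using cancel[OF A Xc] cancel[OF Xc A] cancel[of "A * X" A] cancel[of "X * A" X]
      tr[of "A * X"] tr[of "X * A"] X1 X2 X3 X4 A Xc P by auto
qed

definition diag_matrix :: "nat \<Rightarrow> (nat \<Rightarrow> real) \<Rightarrow> real mat" where
  "diag_matrix m d = mat m m (\<lambda>(i,j). if i = j then d i else 0)"

lemma diag_matrix_carrier: "diag_matrix m d \<in> carrier_mat m m"
  unfolding diag_matrix_def by auto

lemma transpose_diag_matrix: "transpose_mat (diag_matrix m d) = diag_matrix m d"
  unfolding diag_matrix_def by (rule eq_matI) auto

lemma diag_matrix_mult_left_index:
  assumes M: "M \<in> carrier_mat m nc" and a: "a < m" and c: "c < nc"
  shows "(diag_matrix m d * M) $$ (a,c) = d a * M $$ (a,c)"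
proof -
  have "(diag_matrix m d * M) $$ (a,c) = (\<Sum>k\<in>{0..<m}. (if a = k then d a else 0) * M $$ (k,c))"
    using M a c by (auto simp: diag_matrix_def scalar_prod_def intro!: sum.cong)
  also have "\<dots> = (\<Sum>k\<in>{0..<m}. if k = a then d a * M $$ (a,c) else 0)" by (rule sum.cong) auto
  finally show ?thesis using a by simp
qed

lemma diag_matrix_mult_right_index:
  assumes M: "M \<in> carrier_mat nr m" and a: "a < nr" and b: "b < m"
  shows "(M * diag_matrix m d) $$ (a,b) = M $$ (a,b) * d b"
proof -
  have "(M * diag_matrix m d) $$ (a,b) = (\<Sum>k\<in>{0..<m}. M $$ (a,k) * (if k = b then d b else 0))"
    using M a b by (auto simp: diag_matrix_def scalar_prod_def intro!: sum.cong)
  also have "\<dots> = (\<Sum>k\<in>{0..<m}. if k = b then M $$ (a,b) * d b else 0)" by (rule sum.cong) auto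
  finally show ?thesis using b by simp
qed

lemma diag_matrix_mult: "diag_matrix m a * diag_matrix m b = diag_matrix m (\<lambda>i. a i * b i)"
proof (rule eq_matI)
  fix i j assume "i < dim_row (diag_matrix m (\<lambda>i. a i * b i))" "j < dim_col (diag_matrix m (\<lambda>i. a i * b i))"
  hence ij: "i < m" "j < m" by (auto simp: diag_matrix_def)
  show "(diag_matrix m a * diag_matrix m b) $$ (i,j) = diag_matrix m (\<lambda>i. a i * b i) $$ (i,j)"
    using diag_matrix_mult_right_index[OF diag_matrix_carrier ij] ij by (simp add: diag_matrix_def)
qed (auto simp: diag_matrix_def)

lemma diag_matrix_conj_index:
  assumes M: "M \<in> carrier_mat m m" and a: "a < m" and b: "b < m"
  shows "(diag_matrix m d * M * transpose_mat (diag_matrix m d)) $$ (a,b) = d a * M $$ (a,b) * d b"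
  using diag_matrix_mult_right_index[OF mult_carrier_mat[OF diag_matrix_carrier M] a b]
    diag_matrix_mult_left_index[OF M a b]
  by (simp add: transpose_diag_matrix)

lemma is_pinv_diag_matrix: "is_pinv (diag_matrix m d) (diag_matrix m (\<lambda>i. if d i = 0 then 0 else 1 / d i))"
  unfolding is_pinv_def diag_matrix_mult transpose_diag_matrix by (auto simp: diag_matrix_def intro!: eq_matI)

lemma is_pinv_exists:
  assumes A: "A \<in> carrier_mat m m" "transpose_mat A = A"
  shows "\<exists>X. is_pinv A X"
proof -
  from real_symmetric_spectral[OF A] obtain P D where P: "P \<in> carrier_mat m m" and D: "D \<in> carrier_mat m m"
    and dD: "diagonal_mat D" and PP: "transpose_mat P * P = 1\<^sub>m m" and AE: "A = P * D * transpose_mat P"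
    by blast
  have "D = diag_matrix m (\<lambda>i. D $$ (i,i))"
    using D dD by (auto simp: diag_matrix_def diagonal_mat_def intro!: eq_matI)
  hence "is_pinv D (diag_matrix m (\<lambda>i. if D $$ (i,i) = 0 then 0 else 1 / D $$ (i,i)))"
    using is_pinv_diag_matrix by metis
  from is_pinv_orthogonal_conj[OF D P PP this] show ?thesis unfolding AE by blast
qed

lemma is_pinv_pinv:
  assumes "A \<in> carrier_mat m m" "transpose_mat A = A"
  shows "is_pinv A (pinv A)"
proof -
  have "\<exists>!X. is_pinv A X" using is_pinv_exists[OF assms] is_pinv_unique[OF assms(1)] by blast
  from theI'[OF this] show ?thesis unfolding pinv_def is_pinv_def by simp
qed

lemma pinv_orthogonal_conj:
  assumes A: "A \<in> carrier_mat m m" "transpose_mat A = A" and P: "P \<in> carrier_mat m m"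
    and PP: "transpose_mat P * P = 1\<^sub>m m"
  shows "pinv (P * A * transpose_mat P) = P * pinv A * transpose_mat P"
proof -
  have B: "P * A * transpose_mat P \<in> carrier_mat m m" using A P by auto
  have "transpose_mat (P * A * transpose_mat P) = P * A * transpose_mat P"
    using A P by (simp add: transpose_mult[of _ m m _ m] assoc_mult_mat[of _ m m _ m _ m])
  from is_pinv_pinv[OF B this] is_pinv_orthogonal_conj[OF A(1) P PP is_pinv_pinv[OF A]]
  show ?thesis by (rule is_pinv_unique[OF B])
qed

lemma pinv_sign_conj_index:
  assumes C: "C \<in> carrier_mat m m" "transpose_mat C = C" and d: "\<And>a. a < m \<Longrightarrow> d a * d a = 1"
    and ab: "a < m" "b < m"
  shows "pinv (diag_matrix m d * C * transpose_mat (diag_matrix m d)) $$ (a,b) = d a * pinv C $$ (a,b) * d b"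
proof -
  have D: "diag_matrix m d \<in> carrier_mat m m" "transpose_mat (diag_matrix m d) * diag_matrix m d = 1\<^sub>m m"
    unfolding transpose_diag_matrix diag_matrix_mult by (auto simp: diag_matrix_def d intro!: eq_matI)
  have "pinv C \<in> carrier_mat m m" using is_pinv_pinv[OF C] C unfolding is_pinv_def by auto
  thus ?thesis unfolding pinv_orthogonal_conj[OF C D] by (rule diag_matrix_conj_index[OF _ ab])
qed

section \<open>Blocks and block-wise orthonormal bases\<close>

definition in_block :: "(nat \<Rightarrow> nat) \<Rightarrow> nat \<Rightarrow> nat \<Rightarrow> bool" where
  "in_block r k a \<longleftrightarrow> offs r k \<le> a \<and> a < offs r k + r k"

lemma offs_Suc: "offs r (Suc k) = offs r k + r k"
  unfolding offs_def by simp

lemma offs_mono: "k \<le> k' \<Longrightarrow> offs r k \<le> offs r k'"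
  unfolding offs_def by (rule sum_mono2) auto

lemma offs_add_less: "k < K \<Longrightarrow> j < r k \<Longrightarrow> offs r k + j < offs r K"
  using offs_mono[of "Suc k" K r] offs_Suc[of r k] by auto

lemma in_block_unique: "in_block r k a \<Longrightarrow> in_block r k' a \<Longrightarrow> k = k'"
  using offs_mono[of "Suc k" k' r] offs_mono[of "Suc k'" k r]
  by (cases k k' rule: linorder_cases) (auto simp: in_block_def offs_Suc)

lemma in_block_offs_add: "j < r k \<Longrightarrow> in_block r k (offs r k + j)"
  unfolding in_block_def by auto

lemma in_block_offs_add_iff: "j < r k' \<Longrightarrow> in_block r k (offs r k' + j) \<longleftrightarrow> k = k'"
  using in_block_unique in_block_offs_add by metis

lemma in_block_exists: "a < offs r K \<Longrightarrow> \<exists>k<K. in_block r k a"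
proof (induction K)
  case (Suc K)
  show ?case
  proof (cases "a < offs r K")
    case True thus ?thesis using Suc by (meson less_SucI)
  next
    case False thus ?thesis using Suc(2) unfolding offs_Suc in_block_def by (intro exI[of _ K]) auto
  qed
qed (simp add: offs_def)

lemma in_block_offs_add_obtain:
  assumes "in_block r k a" obtains j where "j < r k" "a = offs r k + j"
  using assms unfolding in_block_def by (metis add.commute less_diff_conv2 le_add_diff_inverse)

lemma offs_index_cases:
  assumes "a < offs r K" obtains k j where "k < K" "j < r k" "a = offs r k + j"
  using in_block_exists[OF assms] in_block_offs_add_obtain by metis

lemma sum_lessThan_add: "(\<Sum>i<a + (b::nat). g i) = (\<Sum>i<a. g i) + (\<Sum>j<b. g (a + j))"
  by (induction b) (auto simp: add.assoc)

lemma sum_lessThan_offs: "(\<Sum>i<offs r K. g i) = (\<Sum>k<K. \<Sum>j<r k. g (offs r k + j))"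
  by (induction K) (auto simp: offs_Suc sum_lessThan_add, simp add: offs_def)

lemma sum_lessThan_offs_in_block:
  assumes "k < K"
  shows "(\<Sum>i<offs r K. if in_block r k i then g i else 0) = (\<Sum>j<r k. g (offs r k + j))"
proof -
  have "(\<Sum>i<offs r K. if in_block r k i then g i else 0) =
     (\<Sum>k'<K. \<Sum>j<r k'. if in_block r k (offs r k' + j) then g (offs r k' + j) else 0)"
    by (rule sum_lessThan_offs)
  also have "\<dots> = (\<Sum>k'<K. if k' = k then (\<Sum>j<r k. g (offs r k + j)) else 0)"
    by (intro sum.cong refl) (auto simp: in_block_offs_add_iff)
  also have "\<dots> = (\<Sum>j<r k. g (offs r k + j))" using assms by simp
  finally show ?thesis .
qed

context
  fixes b :: "nat \<Rightarrow> 'v::real_inner" and m :: nat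
  assumes orth: "\<And>i j. i < m \<Longrightarrow> j < m \<Longrightarrow> inner (b i) (b j) = (if i = j then 1 else 0)"
begin

lemma orthonormal_sum_inner_basis: "j < m \<Longrightarrow> inner (\<Sum>i<m. a i *\<^sub>R b i) (b j) = a j"
  by (simp add: inner_sum_left orth if_distrib cong: if_cong)

lemma orthonormal_sum_inner: "inner (\<Sum>i<m. a i *\<^sub>R b i) (\<Sum>i<m. c i *\<^sub>R b i) = (\<Sum>i<m. a i * c i)"
  by (simp add: inner_sum_right orthonormal_sum_inner_basis mult.commute)

lemma orthonormal_expansion: "y \<in> span (b ` {..<m}) \<Longrightarrow> y = (\<Sum>i<m. inner y (b i) *\<^sub>R b i)"
proof (induction rule: span_induct_alt)
  case (step c z y)
  then obtain j where j: "j < m" "z = b j" by auto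
  have "(\<Sum>i<m. inner z (b i) *\<^sub>R b i) = (\<Sum>i<m. if i = j then b j else 0)"
    using j by (intro sum.cong) (auto simp: orth)
  hence "z = (\<Sum>i<m. inner z (b i) *\<^sub>R b i)" using j by simp
  hence "c *\<^sub>R z + y = c *\<^sub>R (\<Sum>i<m. inner z (b i) *\<^sub>R b i) + (\<Sum>i<m. inner y (b i) *\<^sub>R b i)"
    using step by simp
  also have "\<dots> = (\<Sum>i<m. inner (c *\<^sub>R z + y) (b i) *\<^sub>R b i)"
    by (simp add: inner_add_left scaleR_add_left sum.distrib scaleR_sum_right)
  finally show ?case .
qed simp

lemma orthonormal_parseval: "y \<in> span (b ` {..<m}) \<Longrightarrow> y' \<in> span (b ` {..<m}) \<Longrightarrow>
   inner y y' = (\<Sum>i<m. inner y (b i) * inner y' (b i))"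
  by (subst orthonormal_expansion[of y], assumption, subst orthonormal_expansion[of y'], assumption,
      rule orthonormal_sum_inner)

end

definition onb_block :: "(nat \<Rightarrow> nat) \<Rightarrow> (nat \<Rightarrow> 'v::real_inner set) \<Rightarrow> (nat \<Rightarrow> 'v) \<Rightarrow> nat \<Rightarrow> bool" where
  "onb_block r S f k \<longleftrightarrow>
     (\<forall>i<r k. \<forall>j<r k. inner (f (offs r k + i)) (f (offs r k + j)) = (if i = j then 1 else 0)) \<and>
     span ((\<lambda>j. f (offs r k + j)) ` {..<r k}) = S k"

definition block_comb :: "(nat \<Rightarrow> nat) \<Rightarrow> (nat \<Rightarrow> 'v::real_inner) \<Rightarrow> nat \<Rightarrow> real vec \<Rightarrow> 'v" where
  "block_comb r f k \<eta> = (\<Sum>j<r k. (\<eta> $ (offs r k + j)) *\<^sub>R f (offs r k + j))"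

definition vec_comb :: "(nat \<Rightarrow> 'v::real_inner) \<Rightarrow> nat \<Rightarrow> real vec \<Rightarrow> 'v" where
  "vec_comb f n \<eta> = (\<Sum>i<n. (\<eta> $ i) *\<^sub>R f i)"

lemma vec_comb_offs: "vec_comb f (offs r K) \<eta> = (\<Sum>k<K. block_comb r f k \<eta>)"
  unfolding vec_comb_def block_comb_def by (rule sum_lessThan_offs)

lemma block_comb_smult:
  assumes "\<And>j. j < r k \<Longrightarrow> offs r k + j < dim_vec \<eta>"
  shows "block_comb r f k (c \<cdot>\<^sub>v \<eta>) = c *\<^sub>R block_comb r f k \<eta>"
  unfolding block_comb_def scaleR_sum_right by (rule sum.cong[OF refl]) (use assms in auto)

context
  fixes r :: "nat \<Rightarrow> nat" and S :: "nat \<Rightarrow> 'v::real_inner set" and f :: "nat \<Rightarrow> 'v" and k :: nat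
  assumes onb: "onb_block r S f k"
begin

lemma onb_block_orthonormal:
  "i < r k \<Longrightarrow> j < r k \<Longrightarrow> inner (f (offs r k + i)) (f (offs r k + j)) = (if i = j then 1 else 0)"
  using onb unfolding onb_block_def by auto

lemma onb_block_span: "span ((\<lambda>j. f (offs r k + j)) ` {..<r k}) = S k"
  using onb unfolding onb_block_def by auto

lemma inner_block_comb_basis:
  "j < r k \<Longrightarrow> inner (block_comb r f k \<eta>) (f (offs r k + j)) = \<eta> $ (offs r k + j)"
  unfolding block_comb_def by (rule orthonormal_sum_inner_basis[OF onb_block_orthonormal])

lemma inner_block_comb_self:
  "inner (block_comb r f k \<eta>) (block_comb r f k \<eta>) = (\<Sum>j<r k. (\<eta> $ (offs r k + j))\<^sup>2)"
  unfolding block_comb_def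
  by (subst orthonormal_sum_inner[OF onb_block_orthonormal]) (auto simp: power2_eq_square)

lemma block_comb_in_span: "block_comb r f k \<eta> \<in> S k"
  unfolding block_comb_def onb_block_span[symmetric] by (intro span_sum span_scale span_base) auto

lemma onb_block_in_span: "j < r k \<Longrightarrow> f (offs r k + j) \<in> S k"
  unfolding onb_block_span[symmetric] by (rule span_base) auto

lemma onb_block_expansion:
  "y \<in> S k \<Longrightarrow> y = (\<Sum>j<r k. inner y (f (offs r k + j)) *\<^sub>R f (offs r k + j))"
  unfolding onb_block_span[symmetric] by (rule orthonormal_expansion[OF onb_block_orthonormal])

lemma onb_block_parseval: "y \<in> S k \<Longrightarrow> y' \<in> S k \<Longrightarrow>
   inner y y' = (\<Sum>j<r k. inner y (f (offs r k + j)) * inner y' (f (offs r k + j)))"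
  unfolding onb_block_span[symmetric] by (rule orthonormal_parseval[OF onb_block_orthonormal])

lemma onb_block_inner_expansion: "y \<in> S k \<Longrightarrow>
   inner y z = (\<Sum>j<r k. inner y (f (offs r k + j)) * inner (f (offs r k + j)) z)"
  by (subst onb_block_expansion, assumption) (simp add: inner_sum_left)

lemma block_comb_eq_0_iff: "block_comb r f k \<eta> = 0 \<longleftrightarrow> (\<forall>j<r k. \<eta> $ (offs r k + j) = 0)"
  using inner_block_comb_basis[of _ \<eta>] by (auto simp: block_comb_def)

end

definition change_mat :: "(nat \<Rightarrow> nat) \<Rightarrow> nat \<Rightarrow> (nat \<Rightarrow> 'v::real_inner) \<Rightarrow> (nat \<Rightarrow> 'v) \<Rightarrow> real mat" where
  "change_mat r K f2 f1 = mat (offs r K) (offs r K)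
     (\<lambda>(a,b). \<Sum>k<K. if in_block r k a \<and> in_block r k b then inner (f2 a) (f1 b) else 0)"

context
  fixes r :: "nat \<Rightarrow> nat" and S :: "nat \<Rightarrow> 'v::real_inner set" and K :: nat and f1 f2 :: "nat \<Rightarrow> 'v"
  assumes onb1: "\<And>k. k < K \<Longrightarrow> onb_block r S f1 k" and onb2: "\<And>k. k < K \<Longrightarrow> onb_block r S f2 k"
begin

lemma change_mat_carrier: "change_mat r K f2 f1 \<in> carrier_mat (offs r K) (offs r K)"
  unfolding change_mat_def by auto

lemma change_mat_index:
  assumes a: "a < offs r K" and b: "b < offs r K" and k: "k < K" and ab: "in_block r k a \<or> in_block r k b"
  shows "change_mat r K f2 f1 $$ (a,b) = (if in_block r k a \<and> in_block r k b then inner (f2 a) (f1 b) else 0)"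
proof -
  have "change_mat r K f2 f1 $$ (a,b) =
      (\<Sum>k'<K. if in_block r k' a \<and> in_block r k' b then inner (f2 a) (f1 b) else 0)"
    unfolding change_mat_def using a b by simp
  also have "\<dots> =
      (\<Sum>k'<K. if k' = k then (if in_block r k a \<and> in_block r k b then inner (f2 a) (f1 b) else 0) else 0)"
  proof (intro sum.cong refl)
    fix k'
    show "(if in_block r k' a \<and> in_block r k' b then inner (f2 a) (f1 b) else 0) =
      (if k' = k then (if in_block r k a \<and> in_block r k b then inner (f2 a) (f1 b) else 0) else 0)"
    proof (cases "k' = k")
      case False
      hence "\<not> (in_block r k' a \<and> in_block r k' b)" using ab in_block_unique by blast
      thus ?thesis using False by auto
    qed simp
  qed
  finally show ?thesis using k by simp
qed

lemma change_mat_row_sum: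
  assumes k: "k < K" and j: "j < r k"
  shows "(\<Sum>b<offs r K. change_mat r K f2 f1 $$ (offs r k + j, b) * g b) =
    (\<Sum>j'<r k. inner (f2 (offs r k + j)) (f1 (offs r k + j')) * g (offs r k + j'))"
proof -
  have a: "offs r k + j < offs r K" using offs_add_less k j by auto
  have "(\<Sum>b<offs r K. change_mat r K f2 f1 $$ (offs r k + j, b) * g b) =
      (\<Sum>b<offs r K. if in_block r k b then inner (f2 (offs r k + j)) (f1 b) * g b else 0)"
    by (intro sum.cong refl) (auto simp: change_mat_index[OF a _ k] in_block_offs_add[of j r k, OF j])
  also have "\<dots> = (\<Sum>j'<r k. inner (f2 (offs r k + j)) (f1 (offs r k + j')) * g (offs r k + j'))"
    by (rule sum_lessThan_offs_in_block[OF k])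
  finally show ?thesis .
qed

lemma change_mat_col_sum:
  assumes k: "k < K" and j: "j < r k"
  shows "(\<Sum>a<offs r K. change_mat r K f2 f1 $$ (a, offs r k + j) * g a) =
    (\<Sum>j'<r k. inner (f2 (offs r k + j')) (f1 (offs r k + j)) * g (offs r k + j'))"
proof -
  have b: "offs r k + j < offs r K" using offs_add_less k j by auto
  have "(\<Sum>a<offs r K. change_mat r K f2 f1 $$ (a, offs r k + j) * g a) =
      (\<Sum>a<offs r K. if in_block r k a then inner (f2 a) (f1 (offs r k + j)) * g a else 0)"
    by (intro sum.cong refl) (auto simp: change_mat_index[OF _ b k] in_block_offs_add[of j r k, OF j])
  also have "\<dots> = (\<Sum>j'<r k. inner (f2 (offs r k + j')) (f1 (offs r k + j)) * g (offs r k + j'))"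
    by (rule sum_lessThan_offs_in_block[OF k])
  finally show ?thesis .
qed

lemma block_comb_change_mat:
  assumes k: "k < K" and \<eta>: "\<eta> \<in> carrier_vec (offs r K)"
  shows "block_comb r f2 k (change_mat r K f2 f1 *\<^sub>v \<eta>) = block_comb r f1 k \<eta>"
proof -
  have "(change_mat r K f2 f1 *\<^sub>v \<eta>) $ (offs r k + j) = inner (f2 (offs r k + j)) (block_comb r f1 k \<eta>)"
    if j: "j < r k" for j
  proof -
    have "offs r k + j < offs r K" using offs_add_less k j by auto
    hence "(change_mat r K f2 f1 *\<^sub>v \<eta>) $ (offs r k + j) =
        (\<Sum>b<offs r K. change_mat r K f2 f1 $$ (offs r k + j, b) * \<eta> $ b)"
      by (rule mult_mat_vec_index_lessThan[OF change_mat_carrier \<eta>])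
    thus ?thesis unfolding change_mat_row_sum[OF k j] block_comb_def
      by (simp add: inner_sum_right mult.commute)
  qed
  hence "block_comb r f2 k (change_mat r K f2 f1 *\<^sub>v \<eta>) =
      (\<Sum>j<r k. inner (block_comb r f1 k \<eta>) (f2 (offs r k + j)) *\<^sub>R f2 (offs r k + j))"
    unfolding block_comb_def[of r f2] by (intro sum.cong) (auto simp: inner_commute)
  also have "\<dots> = block_comb r f1 k \<eta>"
    by (rule onb_block_expansion[OF onb2[OF k], symmetric], rule block_comb_in_span[OF onb1[OF k]])
  finally show ?thesis .
qed

lemma change_mat_orthogonal:
  "transpose_mat (change_mat r K f2 f1) * change_mat r K f2 f1 = 1\<^sub>m (offs r K)"
proof (rule eq_matI)
  fix b c assume "b < dim_row (1\<^sub>m (offs r K))" "c < dim_col (1\<^sub>m (offs r K))"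
  hence b: "b < offs r K" and c: "c < offs r K" by auto
  obtain kb jb where kb: "kb < K" "jb < r kb" and bb: "b = offs r kb + jb"
    using offs_index_cases[OF b] by blast
  have "(transpose_mat (change_mat r K f2 f1) * change_mat r K f2 f1) $$ (b,c) =
      (\<Sum>a<offs r K. change_mat r K f2 f1 $$ (a,b) * change_mat r K f2 f1 $$ (a,c))"
    using mat_mult_index_lessThan[of "transpose_mat (change_mat r K f2 f1)" "offs r K"] change_mat_carrier b c
    by auto
  also have "\<dots> = (\<Sum>j'<r kb. inner (f2 (offs r kb + j')) (f1 b) * change_mat r K f2 f1 $$ (offs r kb + j', c))"
    unfolding bb by (rule change_mat_col_sum[OF kb])
  also have "\<dots> = (\<Sum>j'<r kb. if in_block r kb c
      then inner (f2 (offs r kb + j')) (f1 b) * inner (f2 (offs r kb + j')) (f1 c) else 0)"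
    using offs_add_less[OF kb(1)] c
    by (intro sum.cong refl) (auto simp: change_mat_index[OF _ c kb(1)] in_block_offs_add)
  also have "\<dots> = 1\<^sub>m (offs r K) $$ (b,c)"
  proof (cases "in_block r kb c")
    case True
    then obtain jc where jc: "jc < r kb" "c = offs r kb + jc" by (rule in_block_offs_add_obtain)
    have "(\<Sum>j'<r kb. inner (f2 (offs r kb + j')) (f1 b) * inner (f2 (offs r kb + j')) (f1 c)) = inner (f1 b) (f1 c)"
      using onb_block_parseval[OF onb2[OF kb(1)], of "f1 b" "f1 c"] onb_block_in_span[OF onb1[OF kb(1)]] kb jc bb
      by (simp add: inner_commute)
    thus ?thesis using True b c bb jc onb_block_orthonormal[OF onb1[OF kb(1)]] kb by auto
  next
    case False
    hence "b \<noteq> c" using in_block_offs_add[of jb r kb] kb bb by auto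
    thus ?thesis using False b c by auto
  qed
  finally show "(transpose_mat (change_mat r K f2 f1) * change_mat r K f2 f1) $$ (b,c) = 1\<^sub>m (offs r K) $$ (b,c)" .
qed (use change_mat_carrier in auto)

lemma change_mat_orthogonal':
  "change_mat r K f2 f1 * transpose_mat (change_mat r K f2 f1) = 1\<^sub>m (offs r K)"
  by (rule mat_mult_left_right_inverse[OF _ change_mat_carrier change_mat_orthogonal])
    (use change_mat_carrier in simp)

lemma cov_mat_change_mat:
  "cov_mat f2 (offs r K) = change_mat r K f2 f1 * cov_mat f1 (offs r K) * transpose_mat (change_mat r K f2 f1)"
  (is "_ = ?T * ?G1 * transpose_mat ?T")
proof (rule eq_matI)
  let ?n = "offs r K"
  fix a c assume "a < dim_row (?T * ?G1 * transpose_mat ?T)" "c < dim_col (?T * ?G1 * transpose_mat ?T)"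
  hence a: "a < ?n" and c: "c < ?n" using change_mat_carrier by (auto simp: cov_mat_def)
  obtain ka ja where ka: "ka < K" "ja < r ka" and aa: "a = offs r ka + ja" using offs_index_cases[OF a] by blast
  obtain kc jc where kc: "kc < K" "jc < r kc" and cc: "c = offs r kc + jc" using offs_index_cases[OF c] by blast
  have G1: "?G1 \<in> carrier_mat ?n ?n" unfolding cov_mat_def by auto
  have Tt: "transpose_mat ?T \<in> carrier_mat ?n ?n" using change_mat_carrier by auto
  have GT: "(?G1 * transpose_mat ?T) $$ (b,c) = inner (f2 c) (f1 b)" if b: "b < ?n" for b
  proof -
    have "(?G1 * transpose_mat ?T) $$ (b,c) = (\<Sum>d<?n. ?T $$ (c,d) * inner (f1 b) (f1 d))"
      using mat_mult_index_lessThan[OF G1 Tt b c] change_mat_carrier b c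
      by (auto simp: cov_mat_def mult.commute intro!: sum.cong)
    also have "\<dots> = (\<Sum>j'<r kc. inner (f2 c) (f1 (offs r kc + j')) * inner (f1 b) (f1 (offs r kc + j')))"
      unfolding cc by (rule change_mat_row_sum[OF kc])
    also have "\<dots> = inner (f2 c) (f1 b)"
      using onb_block_inner_expansion[OF onb1[OF kc(1)], of "f2 c" "f1 b"] onb_block_in_span[OF onb2[OF kc(1)]] kc cc
      by (simp add: inner_commute)
    finally show ?thesis .
  qed
  have "(?T * ?G1 * transpose_mat ?T) $$ (a,c) = (?T * (?G1 * transpose_mat ?T)) $$ (a,c)"
    using change_mat_carrier G1 Tt by (simp add: assoc_mult_mat[of _ ?n ?n _ ?n _ ?n])
  also have "\<dots> = (\<Sum>b<?n. ?T $$ (a,b) * inner (f2 c) (f1 b))"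
    using mat_mult_index_lessThan[of ?T ?n "?G1 * transpose_mat ?T" a c] change_mat_carrier G1 Tt a c GT by auto
  also have "\<dots> = (\<Sum>j'<r ka. inner (f2 a) (f1 (offs r ka + j')) * inner (f2 c) (f1 (offs r ka + j')))"
    unfolding aa by (rule change_mat_row_sum[OF ka])
  also have "\<dots> = inner (f2 a) (f2 c)"
    using onb_block_inner_expansion[OF onb1[OF ka(1)], of "f2 a" "f2 c"] onb_block_in_span[OF onb2[OF ka(1)]] ka aa
    by (simp add: inner_commute)
  finally show "cov_mat f2 ?n $$ (a,c) = (?T * ?G1 * transpose_mat ?T) $$ (a,c)"
    using a c by (simp add: cov_mat_def)
qed (use change_mat_carrier in \<open>auto simp: cov_mat_def\<close>)

end

lemma cov_mat_carrier: "cov_mat f n \<in> carrier_mat n n"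
  unfolding cov_mat_def by auto

lemma transpose_cov_mat: "transpose_mat (cov_mat f n) = cov_mat f n"
  unfolding cov_mat_def by (rule eq_matI) (auto simp: inner_commute)

lemma scalar_prod_cov_mat:
  assumes "\<eta> \<in> carrier_vec n" "\<eta>' \<in> carrier_vec n"
  shows "\<eta> \<bullet> (cov_mat f n *\<^sub>v \<eta>') = inner (vec_comb f n \<eta>) (vec_comb f n \<eta>')"
proof -
  have "inner (vec_comb f n \<eta>) (vec_comb f n \<eta>') = (\<Sum>i<n. \<eta> $ i * (\<Sum>j<n. inner (f i) (f j) * \<eta>' $ j))"
    unfolding vec_comb_def
    by (simp add: inner_sum_left inner_sum_right sum_distrib_left mult_ac, subst sum.swap, simp add: mult_ac)
  also have "\<dots> = \<eta> \<bullet> (cov_mat f n *\<^sub>v \<eta>')" using assms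
    by (auto simp: scalar_prod_def atLeast0LessThan mult_mat_vec_index_lessThan[OF cov_mat_carrier]
        cov_mat_def intro!: sum.cong)
  finally show ?thesis ..
qed

lemma span_Union_onb_blocks:
  assumes onb: "\<And>k. k < K \<Longrightarrow> onb_block r S f k"
  shows "span (\<Union>k<K. S k) = span (f ` {..<offs r K})"
  unfolding span_eq
proof (intro conjI)
  show "(\<Union>k<K. S k) \<subseteq> span (f ` {..<offs r K})"
  proof
    fix y assume "y \<in> (\<Union>k<K. S k)"
    then obtain k where k: "k < K" "y \<in> S k" by auto
    have "(\<lambda>j. f (offs r k + j)) ` {..<r k} \<subseteq> f ` {..<offs r K}"
      using offs_add_less[OF k(1)] by auto
    hence "S k \<subseteq> span (f ` {..<offs r K})"
      unfolding onb_block_span[OF onb[OF k(1)], symmetric] by (rule span_mono)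
    thus "y \<in> span (f ` {..<offs r K})" using k by auto
  qed
  show "f ` {..<offs r K} \<subseteq> span (\<Union>k<K. S k)"
  proof
    fix y assume "y \<in> f ` {..<offs r K}"
    then obtain a where a: "a < offs r K" "y = f a" by auto
    obtain k j where "k < K" "j < r k" "a = offs r k + j" by (rule offs_index_cases[OF a(1)])
    thus "y \<in> span (\<Union>k<K. S k)"
      using onb_block_in_span[OF onb] a by (intro span_base) auto
  qed
qed

lemma cov_mat_orthogonal_family_bound:
  assumes onb: "\<And>k. k < K \<Longrightarrow> onb_block r S f k"
  shows "orthogonal_family_bound (cov_mat f (offs r K)) (offs r K) (dim (span (\<Union>k<K. S k)))"
  unfolding orthogonal_family_bound_def
proof (intro allI impI)
  fix V :: "real vec set"
  assume V: "finite V" "V \<subseteq> carrier_vec (offs r K)"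
    and orth: "\<forall>u\<in>V. \<forall>v\<in>V. u \<noteq> v \<longrightarrow> u \<bullet> (cov_mat f (offs r K) *\<^sub>v v) = 0"
    and nz: "\<forall>u\<in>V. u \<bullet> (cov_mat f (offs r K) *\<^sub>v u) \<noteq> 0"
  define n where "n = offs r K"
  note V = V[folded n_def] and orth = orth[folded n_def] and nz = nz[folded n_def]
  have cov: "u \<bullet> (cov_mat f n *\<^sub>v v) = inner (vec_comb f n u) (vec_comb f n v)" if "u \<in> V" "v \<in> V" for u v
    using scalar_prod_cov_mat that V by blast
  have inj: "inj_on (vec_comb f n) V"
  proof (rule inj_onI, rule ccontr)
    fix u v assume u: "u \<in> V" and v: "v \<in> V" and eq: "vec_comb f n u = vec_comb f n v" and ne: "u \<noteq> v"
    have "u \<bullet> (cov_mat f n *\<^sub>v u) = u \<bullet> (cov_mat f n *\<^sub>v v)" using cov[OF u u] cov[OF u v] eq by simp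
    thus False using orth nz u v ne by auto
  qed
  define Z where "Z = vec_comb f n ` V"
  have "pairwise orthogonal Z" unfolding pairwise_def Z_def orthogonal_def
    using cov orth by auto
  moreover have "0 \<notin> Z"
  proof
    assume "0 \<in> Z"
    then obtain u where "u \<in> V" "vec_comb f n u = 0" unfolding Z_def by auto
    thus False using cov[of u u] nz by auto
  qed
  ultimately have ind: "independent Z" by (rule pairwise_orthogonal_independent)
  have span_eq: "span (\<Union>k<K. S k) = span (f ` {..<n})"
    unfolding n_def by (rule span_Union_onb_blocks[OF onb])
  have ZS: "Z \<subseteq> span (\<Union>k<K. S k)" unfolding Z_def span_eq vec_comb_def
    by (auto intro!: span_sum span_scale simp: span_base)
  obtain B where B: "B \<subseteq> span (\<Union>k<K. S k)" "independent B" "span (\<Union>k<K. S k) \<subseteq> span B"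
    "card B = dim (span (\<Union>k<K. S k))"
    by (rule basis_exists)
  have "finite B" using independent_span_bound[of "f ` {..<n}" B] B span_eq by auto
  moreover have "Z \<subseteq> span B" using ZS B(3) by blast
  ultimately have "card Z \<le> card B" using independent_span_bound[OF _ ind] by blast
  thus "card V \<le> dim (span (\<Union>k<K. S k))" unfolding Z_def using card_image[OF inj] B by simp
qed

lemma dim_span_Union_onb_blocks_le:
  assumes "\<And>k. k < K \<Longrightarrow> onb_block r S f k"
  shows "dim (span (\<Union>k<K. S k)) \<le> offs r K"
proof -
  have "dim (span (\<Union>k<K. S k)) \<le> card (f ` {..<offs r K})"
    by (rule dim_le_card) (auto simp: span_Union_onb_blocks[OF assms])
  also have "\<dots> \<le> offs r K" using card_image_le[of "{..<offs r K}" f] by simp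
  finally show ?thesis .
qed

section \<open>Independence of the D-GCCA construction from the choices\<close>

lemma dgcca_choice_onb_block:
  "dgcca_choice x p K f \<eta> \<Longrightarrow> k < K \<Longrightarrow> onb_block (rk x p) (span_blk x p) f k"
  unfolding dgcca_choice_def onb_block_def Let_def by auto

lemma dgcca_choice_eigenvectors:
  fixes \<eta> :: "nat \<Rightarrow> real vec"
  assumes "dgcca_choice x p K f \<eta>"
  shows "\<And>l. l \<in> {1..rf x p K} \<Longrightarrow> \<eta> l \<in> carrier_vec (dg_n x p K) \<and>
      cov_mat f (dg_n x p K) *\<^sub>v \<eta> l = eigval (cov_mat f (dg_n x p K)) l \<cdot>\<^sub>v \<eta> l"
    and "\<And>l l'. l \<in> {1..rf x p K} \<Longrightarrow> l' \<in> {1..rf x p K} \<Longrightarrow> \<eta> l \<bullet> \<eta> l' = (if l = l' then 1 else 0)"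
  using assms unfolding dgcca_choice_def Let_def dg_n_def by auto

text \<open>Because \<open>f\<^sub>k\<close> is orthonormal, the Frobenius norm of \<open>\<eta>\<^sub>k\<^sup>(\<^sup>l\<^sup>)\<close> used in \<open>dg_z\<close> is the norm
  of \<open>(\<eta>\<^sub>k\<^sup>(\<^sup>l\<^sup>))\<^sup>T f\<^sub>k\<close>.\<close>
lemma dg_z_eq_sgn_block_comb:
  assumes "onb_block (rk x p) (span_blk x p) f k"
  shows "dg_z x p f \<eta> k l = sgn (block_comb (rk x p) f k (\<eta> l))"
proof -
  have "dg_blknorm x p \<eta> k l = norm (block_comb (rk x p) f k (\<eta> l))"
    unfolding dg_blknorm_def norm_eq_sqrt_inner inner_block_comb_self[OF assms] ..
  thus ?thesis unfolding dg_z_def block_comb_eq_0_iff[OF assms, symmetric]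
    by (simp add: sgn_div_norm block_comb_def inverse_eq_divide)
qed

lemma dg_w_eq_vec_comb:
  "dg_w x p K f \<eta> l = (1 / sqrt (dg_lambda x p K f l)) *\<^sub>R vec_comb f (dg_n x p K) (\<eta> l)"
  unfolding dg_w_def vec_comb_def ..

lemma dg_L_max:
  assumes "dg_L x p K f \<ge> 1"
  shows "dg_L x p K f \<le> rf x p K" and "dg_lambda x p K f (dg_L x p K f) > 1"
    and "\<And>l. l \<in> {1..rf x p K} \<Longrightarrow> dg_lambda x p K f l > 1 \<Longrightarrow> l \<le> dg_L x p K f"
proof -
  let ?A = "{l \<in> {1..rf x p K}. dg_lambda x p K f l > 1}"
  have ne: "?A \<noteq> {}" and L: "dg_L x p K f = Max ?A"
    using assms unfolding dg_L_def by (auto split: if_splits)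
  have "dg_L x p K f \<in> ?A" unfolding L by (rule Max_in) (use ne in auto)
  thus "dg_L x p K f \<le> rf x p K" "dg_lambda x p K f (dg_L x p K f) > 1" by auto
  show "l \<le> dg_L x p K f" if "l \<in> {1..rf x p K}" "dg_lambda x p K f l > 1" for l
    unfolding L using that by (intro Max_ge) auto
qed

context
  fixes x :: "nat \<Rightarrow> nat \<Rightarrow> 'v::real_inner" and p :: "nat \<Rightarrow> nat" and K :: nat
    and f1 f2 :: "nat \<Rightarrow> 'v" and eta1 eta2 :: "nat \<Rightarrow> real vec"
  assumes choice1: "dgcca_choice x p K f1 eta1" and choice2: "dgcca_choice x p K f2 eta2"
begin

lemma cov_mat_choice_change:
  "cov_mat f2 (dg_n x p K) = change_mat (rk x p) K f2 f1 * cov_mat f1 (dg_n x p K) *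
     transpose_mat (change_mat (rk x p) K f2 f1)"
  unfolding dg_n_def
  by (rule cov_mat_change_mat[OF dgcca_choice_onb_block[OF choice1] dgcca_choice_onb_block[OF choice2]])

lemma dg_lambda_choice_eq: "dg_lambda x p K f2 = dg_lambda x p K f1"
proof -
  note onb1 = dgcca_choice_onb_block[OF choice1] and onb2 = dgcca_choice_onb_block[OF choice2]
  have "eigval (cov_mat f2 (dg_n x p K)) = eigval (cov_mat f1 (dg_n x p K))"
    unfolding cov_mat_choice_change unfolding dg_n_def
    by (rule eigval_orthogonal_conj[OF cov_mat_carrier change_mat_carrier[OF onb1 onb2]
          change_mat_orthogonal[OF onb1 onb2] change_mat_orthogonal'[OF onb1 onb2]])
  thus ?thesis unfolding dg_lambda_def[abs_def] .
qed

lemma dg_L_choice_eq: "dg_L x p K f2 = dg_L x p K f1"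
  unfolding dg_L_def dg_lambda_choice_eq ..

text \<open>Under the distinctness hypothesis the leading eigenvectors are determined up to sign, since the
  basis change acts on \<open>cov(f)\<close> as an orthogonal similarity.\<close>
lemma leading_eigenvector_choice_sign:
  assumes L: "dg_L x p K f1 \<ge> 1"
    and dist: "\<forall>l\<in>{1..dg_L x p K f1}. \<forall>l'\<in>{1..dg_L x p K f1}.
           l \<noteq> l' \<longrightarrow> dg_lambda x p K f1 l \<noteq> dg_lambda x p K f1 l'"
    and l: "l \<in> {1..dg_L x p K f1}"
  obtains s where "\<bar>s\<bar> = 1" "eta2 l = s \<cdot>\<^sub>v (change_mat (rk x p) K f2 f1 *\<^sub>v eta1 l)"
proof -
  define n where "n = dg_n x p K"
  define T where "T = change_mat (rk x p) K f2 f1"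
  define G2 where "G2 = cov_mat f2 n"
  note onb1 = dgcca_choice_onb_block[OF choice1] and onb2 = dgcca_choice_onb_block[OF choice2]
  have T: "T \<in> carrier_mat n n" "transpose_mat T * T = 1\<^sub>m n"
    unfolding T_def n_def dg_n_def using change_mat_carrier change_mat_orthogonal onb1 onb2 by blast+
  have G2: "G2 \<in> carrier_mat n n" "transpose_mat G2 = G2"
    unfolding G2_def by (rule cov_mat_carrier, rule transpose_cov_mat)
  have G2T: "G2 = T * cov_mat f1 n * transpose_mat T"
    unfolding G2_def T_def n_def by (rule cov_mat_choice_change)
  have lam: "eigval G2 = dg_lambda x p K f1"
    using dg_lambda_choice_eq unfolding dg_lambda_def[abs_def] G2_def n_def by simp
  note L_max = dg_L_max[OF L]
  have Lmax: "eigval G2 (dg_L x p K f1) > 1"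
    "\<And>l. l \<in> {1..rf x p K} \<Longrightarrow> eigval G2 l > 1 \<Longrightarrow> l \<le> dg_L x p K f1"
    using L_max(2,3) unfolding lam by auto
  have dist': "eigval G2 a \<noteq> eigval G2 b"
    if "a \<in> {1..dg_L x p K f1}" "b \<in> {1..dg_L x p K f1}" "a \<noteq> b" for a b
    using dist that unfolding lam by blast
  have lR: "l \<in> {1..rf x p K}" using l L_max(1) by auto
  note eig1 = dgcca_choice_eigenvectors[OF choice1, folded n_def]
  note eig2 = dgcca_choice_eigenvectors[OF choice2, folded n_def G2_def]
  have e1: "eta1 l \<in> carrier_vec n" "cov_mat f1 n *\<^sub>v eta1 l = eigval G2 l \<cdot>\<^sub>v eta1 l"
    "eta1 l \<bullet> eta1 l = 1"
    using eig1(1)[OF lR] eig1(2)[OF lR lR] unfolding lam dg_lambda_def n_def by auto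
  define u where "u = T *\<^sub>v eta1 l"
  have u: "u \<in> carrier_vec n" "G2 *\<^sub>v u = eigval G2 l \<cdot>\<^sub>v u" "u \<bullet> u = 1"
    using orthogonal_conj_eigenvector[OF cov_mat_carrier T e1(1,2)] T e1 unfolding u_def G2T by auto
  have u0: "u \<noteq> 0\<^sub>v n" using u by auto
  have bound: "orthogonal_family_bound G2 n (rf x p K)"
    using cov_mat_orthogonal_family_bound[OF onb2] unfolding rf_def G2_def n_def dg_n_def .
  have R: "rf x p K \<le> n"
    using dim_span_Union_onb_blocks_le[OF onb2] unfolding rf_def n_def dg_n_def by blast
  obtain c where c: "eta2 l = c \<cdot>\<^sub>v u"
    using leading_eigenvector_unique[OF G2 eig2(1) eig2(2) R L L_max(1) Lmax dist' bound l u(1,2) u0]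
    by blast
  have "1 = c * c * (u \<bullet> u)" using eig2(2)[OF lR lR] u unfolding c by simp
  hence "\<bar>c\<bar> = 1" using u by (simp add: abs_square_eq_1[symmetric] power2_eq_square)
  thus thesis using that c unfolding u_def T_def by blast
qed

lemma dg_z_dg_w_choice_sign:
  assumes L: "dg_L x p K f1 \<ge> 1"
    and dist: "\<forall>l\<in>{1..dg_L x p K f1}. \<forall>l'\<in>{1..dg_L x p K f1}.
           l \<noteq> l' \<longrightarrow> dg_lambda x p K f1 l \<noteq> dg_lambda x p K f1 l'"
    and l: "l \<in> {1..dg_L x p K f1}"
  obtains s where "\<bar>s\<bar> = 1" "\<And>k. k < K \<Longrightarrow> dg_z x p f2 eta2 k l = s *\<^sub>R dg_z x p f1 eta1 k l"
    "dg_w x p K f2 eta2 l = s *\<^sub>R dg_w x p K f1 eta1 l"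
proof -
  define r where "r = rk x p"
  define T where "T = change_mat r K f2 f1"
  note onb1 = dgcca_choice_onb_block[OF choice1, folded r_def]
    and onb2 = dgcca_choice_onb_block[OF choice2, folded r_def]
  obtain s where s: "\<bar>s\<bar> = 1" "eta2 l = s \<cdot>\<^sub>v (T *\<^sub>v eta1 l)"
    using leading_eigenvector_choice_sign[OF L dist l] unfolding T_def r_def by blast
  have "l \<in> {1..rf x p K}" using l dg_L_max(1)[OF L] by auto
  hence e1: "eta1 l \<in> carrier_vec (offs r K)"
    using dgcca_choice_eigenvectors(1)[OF choice1] unfolding dg_n_def r_def by blast
  have T: "T \<in> carrier_mat (offs r K) (offs r K)" unfolding T_def by (rule change_mat_carrier[OF onb1 onb2])
  have blk: "block_comb r f2 k (eta2 l) = s *\<^sub>R block_comb r f1 k (eta1 l)" if k: "k < K" for k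
  proof -
    have "block_comb r f2 k (eta2 l) = s *\<^sub>R block_comb r f2 k (T *\<^sub>v eta1 l)"
      unfolding s(2) by (rule block_comb_smult) (use offs_add_less[OF k] T in auto)
    moreover have "block_comb r f2 k (T *\<^sub>v eta1 l) = block_comb r f1 k (eta1 l)"
      unfolding T_def by (rule block_comb_change_mat[OF onb1 onb2 k e1])
    ultimately show ?thesis by simp
  qed
  have sgn_s: "sgn s = s" using s(1) by (auto simp: sgn_if abs_if)
  have "dg_z x p f2 eta2 k l = s *\<^sub>R dg_z x p f1 eta1 k l" if "k < K" for k
    unfolding dg_z_eq_sgn_block_comb[OF onb2[OF that, unfolded r_def]]
      dg_z_eq_sgn_block_comb[OF onb1[OF that, unfolded r_def]] blk[OF that, unfolded r_def]
    by (simp add: sgn_scaleR sgn_s)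
  moreover have "dg_w x p K f2 eta2 l = s *\<^sub>R dg_w x p K f1 eta1 l"
    unfolding dg_w_eq_vec_comb dg_lambda_choice_eq dg_n_def vec_comb_offs r_def[symmetric]
    by (simp add: blk scaleR_sum_right)
  ultimately show thesis using that s(1) by blast
qed

end

lemma dg_Aset_sign_flip:
  assumes s: "\<bar>s\<bar> = 1"
    and z: "\<And>k. k < K \<Longrightarrow> dg_z x p f2 eta2 k l = s *\<^sub>R dg_z x p f1 eta1 k l"
    and w: "dg_w x p K f2 eta2 l = s *\<^sub>R dg_w x p K f1 eta1 l"
  shows "dg_Aset x p K f2 eta2 l = dg_Aset x p K f1 eta1 l"
proof -
  have ss: "s * s = 1" using s abs_mult_self_eq[of s] by simp
  have eq: "inner (dg_z x p f2 eta2 j l - a *\<^sub>R dg_w x p K f2 eta2 l) (dg_z x p f2 eta2 k l - a *\<^sub>R dg_w x p K f2 eta2 l)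
    = inner (dg_z x p f1 eta1 j l - a *\<^sub>R dg_w x p K f1 eta1 l) (dg_z x p f1 eta1 k l - a *\<^sub>R dg_w x p K f1 eta1 l)"
    if "j < K" "k < K" for j k a
  proof -
    have "dg_z x p f2 eta2 i l - a *\<^sub>R dg_w x p K f2 eta2 l = s *\<^sub>R (dg_z x p f1 eta1 i l - a *\<^sub>R dg_w x p K f1 eta1 l)"
      if "i < K" for i
      using z[OF that] w by (simp add: algebra_simps)
    thus ?thesis using that ss by (simp add: mult.assoc[symmetric])
  qed
  show ?thesis unfolding dg_Aset_def by (simp add: eq cong: conj_cong)
qed

lemma dg_alpha_sign_flip:
  assumes "\<bar>s\<bar> = 1"
    and "\<And>k. k < K \<Longrightarrow> dg_z x p f2 eta2 k l = s *\<^sub>R dg_z x p f1 eta1 k l"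
    and "dg_w x p K f2 eta2 l = s *\<^sub>R dg_w x p K f1 eta1 l"
  shows "dg_alpha x p K f2 eta2 l = dg_alpha x p K f1 eta1 l"
  using dg_Aset_sign_flip[OF assms] unfolding dg_alpha_def by simp

lemma dg_covz_sign_flip:
  assumes I0: "dg_I0list x p K f2 eta2 = dg_I0list x p K f1 eta1"
    and z: "\<And>l. l \<in> set (dg_I0list x p K f1 eta1) \<Longrightarrow> dg_z x p f2 eta2 k l = s l *\<^sub>R dg_z x p f1 eta1 k l"
  shows "dg_covz x p K f2 eta2 k = diag_matrix (length (dg_I0list x p K f1 eta1)) (\<lambda>a. s (dg_I0list x p K f1 eta1 ! a))
    * dg_covz x p K f1 eta1 k
    * transpose_mat (diag_matrix (length (dg_I0list x p K f1 eta1)) (\<lambda>a. s (dg_I0list x p K f1 eta1 ! a)))"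
    (is "_ = ?S * ?C * transpose_mat ?S")
proof -
  let ?li = "dg_I0list x p K f1 eta1"
  have C: "?C \<in> carrier_mat (length ?li) (length ?li)" unfolding dg_covz_def by auto
  show ?thesis
  proof (rule eq_matI)
    fix a b assume "a < dim_row (?S * ?C * transpose_mat ?S)" "b < dim_col (?S * ?C * transpose_mat ?S)"
    hence a: "a < length ?li" and b: "b < length ?li" by (auto simp: diag_matrix_def)
    show "dg_covz x p K f2 eta2 k $$ (a,b) = (?S * ?C * transpose_mat ?S) $$ (a,b)"
      unfolding diag_matrix_conj_index[OF C a b] using a b z[OF nth_mem[OF a]] z[OF nth_mem[OF b]]
      by (simp add: dg_covz_def I0 mult_ac)
  qed (auto simp: dg_covz_def I0 diag_matrix_def)
qed

lemma dg_common_sign_flip: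
  assumes L: "dg_L x p K f2 = dg_L x p K f1"
    and s: "\<And>l. l \<in> {1..dg_L x p K f1} \<Longrightarrow> \<bar>s l\<bar> = 1"
    and z: "\<And>l k. l \<in> {1..dg_L x p K f1} \<Longrightarrow> k < K \<Longrightarrow> dg_z x p f2 eta2 k l = s l *\<^sub>R dg_z x p f1 eta1 k l"
    and w: "\<And>l. l \<in> {1..dg_L x p K f1} \<Longrightarrow> dg_w x p K f2 eta2 l = s l *\<^sub>R dg_w x p K f1 eta1 l"
    and k: "k < K"
  shows "dg_common x p K f2 eta2 k i = dg_common x p K f1 eta1 k i"
proof -
  have alpha: "dg_alpha x p K f2 eta2 l = dg_alpha x p K f1 eta1 l" if "l \<in> {1..dg_L x p K f1}" for l
    by (rule dg_alpha_sign_flip[OF s[OF that] z[OF that] w[OF that]])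
  have I0: "dg_I0 x p K f2 eta2 = dg_I0 x p K f1 eta1"
    unfolding dg_I0_def L using alpha by auto
  have I0list: "dg_I0list x p K f2 eta2 = dg_I0list x p K f1 eta1"
    unfolding dg_I0list_def I0 ..
  define li where "li = dg_I0list x p K f1 eta1"
  define m where "m = length li"
  have li: "li ! a \<in> {1..dg_L x p K f1}" if "a < m" for a
  proof -
    have "li ! a \<in> set li" using that unfolding m_def by simp
    also have "set li = dg_I0 x p K f1 eta1" unfolding li_def dg_I0list_def
      by (rule set_sorted_list_of_set) (simp add: dg_I0_def)
    finally show ?thesis unfolding dg_I0_def by auto
  qed
  define d where "d a = s (li ! a)" for a
  have dd: "d a * d a = 1" if "a < m" for a
    using s[OF li[OF that]] abs_mult_self_eq[of "s (li ! a)"] unfolding d_def by simp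
  define C1 where "C1 = dg_covz x p K f1 eta1 k"
  have C1: "C1 \<in> carrier_mat m m" "transpose_mat C1 = C1"
    unfolding C1_def dg_covz_def li_def[symmetric] m_def by (auto simp: inner_commute intro!: eq_matI)
  have "z \<in> set li \<Longrightarrow> z \<in> {1..dg_L x p K f1}" for z using li by (metis in_set_conv_nth m_def)
  hence covz: "dg_covz x p K f2 eta2 k = diag_matrix m d * C1 * transpose_mat (diag_matrix m d)"
    using dg_covz_sign_flip[OF I0list, of k s] z[OF _ k] unfolding C1_def li_def[symmetric] m_def d_def
    by blast
  have "pinv (dg_covz x p K f2 eta2 k) $$ (a,b) = d a * pinv C1 $$ (a,b) * d b" if "a < m" "b < m" for a b
    unfolding covz by (rule pinv_sign_conj_index[OF C1 dd that])
  moreover have "dg_c x p K f2 eta2 (li ! b) = d b *\<^sub>R dg_c x p K f1 eta1 (li ! b)" if "b < m" for b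
    unfolding dg_c_def alpha[OF li[OF that]] w[OF li[OF that]] d_def by simp
  moreover note z[OF li k, folded d_def]
  ultimately have "(inner (x k i) (dg_z x p f2 eta2 k (li ! a)) * pinv (dg_covz x p K f2 eta2 k) $$ (a,b))
       *\<^sub>R dg_c x p K f2 eta2 (li ! b) =
     (inner (x k i) (dg_z x p f1 eta1 k (li ! a)) * pinv C1 $$ (a,b)) *\<^sub>R dg_c x p K f1 eta1 (li ! b)"
    if "a < m" "b < m" for a b
    using that dd[OF that(1)] dd[OF that(2)] by (simp add: mult_ac)
  thus ?thesis unfolding dg_common_def I0 I0list li_def[symmetric] m_def[symmetric] C1_def
    by (intro if_cong refl sum.cong) auto
qed

theorem theorem4:
  fixes x :: "nat \<Rightarrow> nat \<Rightarrow> 'v::real_inner" and p :: "nat \<Rightarrow> nat" and K :: nat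
    and f1 f2 :: "nat \<Rightarrow> 'v" and eta1 eta2 :: "nat \<Rightarrow> real vec"
  assumes "K \<ge> 2"
    and "\<forall>k<K. rk x p k \<ge> 1"
    and "dgcca_choice x p K f1 eta1"
    and "dgcca_choice x p K f2 eta2"
    and "dg_L x p K f1 \<ge> 1"
    and "\<forall>l\<in>{1..dg_L x p K f1}. \<forall>l'\<in>{1..dg_L x p K f1}.
           l \<noteq> l' \<longrightarrow> dg_lambda x p K f1 l \<noteq> dg_lambda x p K f1 l'"
  shows "\<forall>k<K. \<forall>i<p k. dg_common x p K f1 eta1 k i = dg_common x p K f2 eta2 k i"
proof -
  have "\<forall>l\<in>{1..dg_L x p K f1}. \<exists>s. \<bar>s\<bar> = 1 \<and>
      (\<forall>k<K. dg_z x p f2 eta2 k l = s *\<^sub>R dg_z x p f1 eta1 k l) \<and>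
      dg_w x p K f2 eta2 l = s *\<^sub>R dg_w x p K f1 eta1 l"
    using dg_z_dg_w_choice_sign[OF assms(3,4,5,6)] by metis
  then obtain s where s: "\<And>l. l \<in> {1..dg_L x p K f1} \<Longrightarrow> \<bar>s l\<bar> = 1 \<and>
      (\<forall>k<K. dg_z x p f2 eta2 k l = s l *\<^sub>R dg_z x p f1 eta1 k l) \<and>
      dg_w x p K f2 eta2 l = s l *\<^sub>R dg_w x p K f1 eta1 l"
    by metis
  have "dg_common x p K f2 eta2 k i = dg_common x p K f1 eta1 k i" if "k < K" for k i
    by (rule dg_common_sign_flip[OF dg_L_choice_eq[OF assms(3,4)] _ _ _ that]) (use s in blast)+
  thus ?thesis by simp
qed

end
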